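(* Let $G=(V,w,m)$ be a finite connected weighted graph satisfying $CD(K,\infty)$ for some $K>0$, let $D:=\operatorname{Deg}_{\max}$, and let $0=\lambda_0<\lambda_1\le\lambda_2\le\dots$ be the eigenvalues of $-\Delta$ counted with multiplicity. Suppose $\lambda_{\deg_{\max}}=K$. Then: (1) $G$ has the hypercube shell structure $HSS\left(\frac{2D}K,\frac K2,x_0\right)$ for every $x_0\in V$; (2) $G$ has constant edge degree, i.e. there is $\kappa_0>0$ with $w(x,y)/m(x)\in\{0,\kappa_0\}$ for all $x,y\in V$.
   Context: A weighted graph is $G=(V,w,m)$ with $V$ countable, $w:V\times V\to[0,\infty)$ symmetric with $w(x,x)=0$, $m:V\to(0,\infty)$; $x\sim y$ iff $w(x,y)>0$. Laplacian $\Delta f(x)=\frac1{m(x)}\sum_y w(x,y)(f(y)-f(x))$ (self-adjoint on $\ell^2(V,m)$). $\operatorname{Deg}(x)=\frac1{m(x)}\sum_yw(x,y)$, $\operatorname{Deg}_{\max}=\max_x\operatorname{Deg}(x)$, $\deg(x)=\#\{y:y\sim x\}$, $\deg_{\max}=\max_x\deg(x)$. $d$ is the combinatorial graph distance. $2\Gamma(f,g)=\Delta(fg)-f\Delta g-g\Delta f$, $2\Gamma_2(f,g)=\Delta\Gamma(f,g)-\Gamma(f,\Delta g)-\Gamma(g,\Delta f)$, $\Gamma f=\Gamma(f,f)$, $\Gamma_2f=\Gamma_2(f,f)$; $CD(K,\infty)$ means $\Gamma_2f(x)\ge K\Gamma f(x)$ for all $f$ and $x$. $d_-^{x_0}(z)=\sum_{y\sim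 z,\ d(y,x_0)<d(z,x_0)}\frac{w(y,z)}{m(z)}$. Hypercube shell structure $HSS(N,W,x_0)$ ($N,W>0$): (i) $\operatorname{Deg}(x)=NW$ for all $x\in V$; (ii) $G$ is bipartite; (iii) $d_-^{x_0}(x)=W\,d(x,x_0)$ for all $x\in V$. *)

theory Defs
  imports "HOL-Analysis.Analysis" "HOL-Computational_Algebra.Polynomial"
begin

definition weighted_graph :: "('v::finite \<Rightarrow> 'v \<Rightarrow> real) \<Rightarrow> ('v \<Rightarrow> real) \<Rightarrow> bool" where
  "weighted_graph w m \<longleftrightarrow> (\<forall>x y. w x y = w y x) \<and> (\<forall>x y. w x y \<ge> 0) \<and>
      (\<forall>x. w x x = 0) \<and> (\<forall>x. m x > 0)"

definition adj :: "('v \<Rightarrow> 'v \<Rightarrow> real) \<Rightarrow> 'v \<Rightarrow> 'v \<Rightarrow> bool" where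
  "adj w x y \<longleftrightarrow> w x y > 0"

definition gdist :: "('v \<Rightarrow> 'v \<Rightarrow> real) \<Rightarrow> 'v \<Rightarrow> 'v \<Rightarrow> nat" where
  "gdist w x y = (LEAST n. (adj w ^^ n) x y)"

definition connected_graph :: "('v \<Rightarrow> 'v \<Rightarrow> real) \<Rightarrow> bool" where
  "connected_graph w \<longleftrightarrow> (\<forall>x y. \<exists>n. (adj w ^^ n) x y)"

definition bipartite_graph :: "('v \<Rightarrow> 'v \<Rightarrow> real) \<Rightarrow> bool" where
  "bipartite_graph w \<longleftrightarrow> (\<exists>c :: 'v \<Rightarrow> bool. \<forall>x y. adj w x y \<longrightarrow> c x \<noteq> c y)"

definition Lap :: "('v::finite \<Rightarrow> 'v \<Rightarrow> real) \<Rightarrow> ('v \<Rightarrow> real) \<Rightarrow> ('v \<Rightarrow> real) \<Rightarrow> 'v \<Rightarrow> real" where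
  "Lap w m f x = (1 / m x) * (\<Sum>y\<in>UNIV. w x y * (f y - f x))"

definition Gam :: "('v::finite \<Rightarrow> 'v \<Rightarrow> real) \<Rightarrow> ('v \<Rightarrow> real) \<Rightarrow> ('v \<Rightarrow> real) \<Rightarrow> ('v \<Rightarrow> real) \<Rightarrow> 'v \<Rightarrow> real" where
  "Gam w m f g x = (Lap w m (\<lambda>z. f z * g z) x - f x * Lap w m g x - g x * Lap w m f x) / 2"

definition Gam2 :: "('v::finite \<Rightarrow> 'v \<Rightarrow> real) \<Rightarrow> ('v \<Rightarrow> real) \<Rightarrow> ('v \<Rightarrow> real) \<Rightarrow> ('v \<Rightarrow> real) \<Rightarrow> 'v \<Rightarrow> real" where
  "Gam2 w m f g x = (Lap w m (Gam w m f g) x - Gam w m f (Lap w m g) x - Gam w m g (Lap w m f) x) / 2"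

definition CD_inf :: "('v::finite \<Rightarrow> 'v \<Rightarrow> real) \<Rightarrow> ('v \<Rightarrow> real) \<Rightarrow> real \<Rightarrow> bool" where
  "CD_inf w m K \<longleftrightarrow> (\<forall>f x. Gam2 w m f f x \<ge> K * Gam w m f f x)"

definition Deg :: "('v::finite \<Rightarrow> 'v \<Rightarrow> real) \<Rightarrow> ('v \<Rightarrow> real) \<Rightarrow> 'v \<Rightarrow> real" where
  "Deg w m x = (1 / m x) * (\<Sum>y\<in>UNIV. w x y)"

definition Deg_max :: "('v::finite \<Rightarrow> 'v \<Rightarrow> real) \<Rightarrow> ('v \<Rightarrow> real) \<Rightarrow> real" where
  "Deg_max w m = Max (range (Deg w m))"

definition deg :: "('v::finite \<Rightarrow> 'v \<Rightarrow> real) \<Rightarrow> 'v \<Rightarrow> nat" where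
  "deg w x = card {y. adj w y x}"

definition deg_max :: "('v::finite \<Rightarrow> 'v \<Rightarrow> real) \<Rightarrow> nat" where
  "deg_max w = Max (range (deg w))"

definition d_minus :: "('v::finite \<Rightarrow> 'v \<Rightarrow> real) \<Rightarrow> ('v \<Rightarrow> real) \<Rightarrow> 'v \<Rightarrow> 'v \<Rightarrow> real" where
  "d_minus w m x0 z = (\<Sum>y\<in>{y. adj w y z \<and> gdist w y x0 < gdist w z x0}. w y z / m z)"

definition HSS :: "('v::finite \<Rightarrow> 'v \<Rightarrow> real) \<Rightarrow> ('v \<Rightarrow> real) \<Rightarrow> real \<Rightarrow> real \<Rightarrow> 'v \<Rightarrow> bool" where
  "HSS w m N W x0 \<longleftrightarrow> N > 0 \<and> W > 0 \<and> (\<forall>x. Deg w m x = N * W) \<and> bipartite_graph w \<and>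
      (\<forall>x. d_minus w m x0 x = W * real (gdist w x x0))"

definition negLap_matrix :: "('v::finite \<Rightarrow> 'v \<Rightarrow> real) \<Rightarrow> ('v \<Rightarrow> real) \<Rightarrow> real^'v^'v" where
  "negLap_matrix w m = (\<chi> x y. - Lap w m (\<lambda>z. if z = y then 1 else 0) x)"

definition char_poly_mat :: "real^'n^'n \<Rightarrow> real poly" where
  "char_poly_mat A = det (\<chi> i j. (if i = j then [:0, 1:] else 0) - [:A $ i $ j:])"

text \<open>Eigenvalues of -Lap counted with (algebraic = geometric, as -Lap is self-adjoint
  on l^2(V,m)) multiplicity, in nondecreasing order.\<close>
definition eigenvalues :: "('v::finite \<Rightarrow> 'v \<Rightarrow> real) \<Rightarrow> ('v \<Rightarrow> real) \<Rightarrow> real list" where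
  "eigenvalues w m = (THE ls. sorted ls \<and>
      char_poly_mat (negLap_matrix w m) = prod_list (map (\<lambda>l. [:- l, 1:]) ls))"

end

theory Submission
  imports Defs
begin

text \<open>By the Lichnerowicz estimate every nonzero eigenvalue of \<open>-\<Delta>\<close> is at least \<open>K\<close>, and
  \<open>0\<close> is simple by connectedness, so \<open>\<lambda>\<^bsub>deg_max\<^esub> = K\<close> forces the \<open>K\<close>-eigenspace to have
  dimension at least \<open>deg_max\<close>. For a \<open>K\<close>-eigenfunction \<open>f\<close> the curvature condition is an
  equality, \<open>\<Gamma>\<^sub>2(f,h) = K \<Gamma>(f,h)\<close> for every \<open>h\<close>. Testing with \<open>h = \<delta>\<^sub>z\<close> at distance two
  from \<open>x\<close> shows that an eigenfunction whose gradient vanishes at \<open>x\<close> vanishes identically, so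
  the gradient at \<open>x\<close> maps the eigenspace onto all functions on the neighbourhood of \<open>x\<close>;
  in particular some eigenfunction \<open>g\<close> has \<open>g(y) = g(x) + 1\<close> for all \<open>y \<sim> x\<close>. Testing
  with \<open>\<delta>\<^sub>y\<close> for neighbours \<open>y\<close> then shows that \<open>Deg\<close> is constant, that there are no
  triangles and that every edge has \<open>w(x,y)/m(x) = K/2\<close>. Finally \<open>g(z) = g(x\<^sub>0) + d(z,x\<^sub>0)\<close>
  with every edge joining consecutive shells, which gives bipartiteness and
  \<open>d\<^sub>-(z) = (K/2) d(z,x\<^sub>0)\<close>.\<close>

section \<open>Linear algebra\<close>

lemma nonneg_quadratic_imp_linear_coeff_zero:
  fixes b q :: real
  assumes nonneg: "\<And>t. 0 \<le> 2 * t * b + t^2 * q"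
  shows "b = 0"
proof (rule ccontr)
  assume b: "b \<noteq> 0"
  have q: "0 \<le> q" using nonneg[of 1] nonneg[of "-1"] by simp
  define e where "e = 1 / (q + 1)"
  have e: "0 < e" "e * q < 2" using q unfolding e_def by (simp_all add: field_simps)
  have "0 \<le> 2 * (- e * b) * b + (- e * b)^2 * q" by (rule nonneg)
  also have "\<dots> = (e * b^2) * (e * q - 2)" by (simp add: power2_eq_square algebra_simps)
  also have "\<dots> < 0" using e b by (intro mult_pos_neg) auto
  finally show False by simp
qed

lemma inner_symmetric_matrix:
  fixes S :: "real^'n^'n"
  assumes "transpose S = S"
  shows "x \<bullet> (S *v y) = (S *v x) \<bullet> y"
proof -
  have "x \<bullet> (S *v y) = (x v* S) \<bullet> y" by (simp add: dot_lmul_matrix)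
  also have "x v* S = transpose S *v x" by simp
  finally show ?thesis using assms by simp
qed

lemma mat_mult_vector: "mat t *v (v::real^'n) = t *\<^sub>R v"
proof -
  have "(mat t *v v) $ i = (\<Sum>j\<in>UNIV. if i = j then t * v$j else 0)" for i
    unfolding matrix_vector_mult_def mat_def by (simp only: vec_lambda_beta) (rule sum.cong, simp_all)
  then show ?thesis by (simp add: vec_eq_iff)
qed

lemma rayleigh_quotient_attains_max:
  fixes S :: "real^'n^'n"
  assumes U: "subspace U" and x0: "x0 \<in> U" "x0 \<noteq> 0"
  obtains u where "u \<in> U" "norm u = 1" "\<And>y. y \<in> U \<Longrightarrow> y \<bullet> (S *v y) \<le> (u \<bullet> (S *v u)) * (y \<bullet> y)"
proof -
  let ?C = "sphere 0 1 \<inter> U"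
  let ?q = "\<lambda>v. v \<bullet> (S *v v)"
  have "compact ?C" using closed_subspace[OF U] by (intro compact_Int_closed compact_sphere)
  moreover have "x0 /\<^sub>R norm x0 \<in> ?C" using x0 U by (simp add: subspace_scale)
  moreover have "continuous_on ?C ?q"
    by (intro continuous_intros linear_continuous_on matrix_vector_mul_linear linear_linear[THEN iffD1])
  ultimately obtain u where u: "u \<in> ?C" and umax: "\<And>y. y \<in> ?C \<Longrightarrow> ?q y \<le> ?q u"
    using continuous_attains_sup[of ?C ?q] by blast
  have "?q y \<le> ?q u * (y \<bullet> y)" if "y \<in> U" for y
  proof (cases "y = 0")
    case False
    then have "?q (y /\<^sub>R norm y) \<le> ?q u" using that U by (intro umax) (simp add: subspace_scale)
    moreover have "?q (y /\<^sub>R norm y) = ?q y / (norm y)^2"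
      by (simp add: matrix_vector_mult_scaleR inner_scaleR_left inner_scaleR_right power2_eq_square field_simps)
    moreover have "y \<bullet> y = (norm y)^2" by (simp add: dot_square_norm)
    moreover have "0 < (norm y)^2" using False by simp
    ultimately show ?thesis by (simp add: field_simps)
  qed simp
  then show thesis using u that by auto
qed

text \<open>Moving the maximiser \<open>u\<close> to \<open>u + t x\<close> gives a nonnegative quadratic in \<open>t\<close>, whose linear
  coefficient \<open>x \<bullet> (S u - \<lambda> u)\<close> must therefore vanish for all \<open>x \<in> U\<close>.\<close>
lemma rayleigh_maximizer_is_eigenvector:
  fixes S :: "real^'n^'n"
  assumes sym: "transpose S = S" and U: "subspace U" and inv: "\<And>x. x \<in> U \<Longrightarrow> S *v x \<in> U"
    and u: "u \<in> U" "norm u = 1"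
    and umax: "\<And>y. y \<in> U \<Longrightarrow> y \<bullet> (S *v y) \<le> (u \<bullet> (S *v u)) * (y \<bullet> y)"
  shows "S *v u = (u \<bullet> (S *v u)) *\<^sub>R u"
proof -
  define l where "l = u \<bullet> (S *v u)"
  have uu: "u \<bullet> u = 1" using u by (simp add: dot_square_norm)
  have orth: "x \<bullet> (S *v u - l *\<^sub>R u) = 0" if x: "x \<in> U" for x
  proof -
    have "0 \<le> 2 * t * (- (x \<bullet> (S *v u - l *\<^sub>R u))) + t^2 * (l * (x \<bullet> x) - x \<bullet> (S *v x))" for t
    proof -
      have "u + t *\<^sub>R x \<in> U" using u x U by (simp add: subspace_add subspace_scale)
      then have "(u + t *\<^sub>R x) \<bullet> (S *v (u + t *\<^sub>R x)) \<le> l * ((u + t *\<^sub>R x) \<bullet> (u + t *\<^sub>R x))"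
        unfolding l_def by (rule umax)
      moreover have "u \<bullet> (S *v x) = x \<bullet> (S *v u)"
        using inner_symmetric_matrix[OF sym, of u x] by (simp add: inner_commute)
      ultimately show ?thesis
        using uu by (simp add: matrix_vector_right_distrib matrix_vector_mult_scaleR inner_add_left
            inner_add_right inner_diff_right inner_commute power2_eq_square l_def algebra_simps)
    qed
    then have "- (x \<bullet> (S *v u - l *\<^sub>R u)) = 0" by (rule nonneg_quadratic_imp_linear_coeff_zero)
    then show ?thesis by simp
  qed
  have "S *v u - l *\<^sub>R u \<in> U" using inv[OF u(1)] u(1) U by (simp add: subspace_diff subspace_scale)
  then have "(S *v u - l *\<^sub>R u) \<bullet> (S *v u - l *\<^sub>R u) = 0" by (rule orth)
  then show ?thesis by (simp add: l_def)
qed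

lemma symmetric_matrix_orthonormal_eigenvectors:
  fixes S :: "real^'n^'n"
  assumes sym: "transpose S = S"
  shows "k \<le> CARD('n) \<Longrightarrow> \<exists>B. finite B \<and> card B = k \<and> pairwise orthogonal B \<and>
     (\<forall>b\<in>B. norm b = 1 \<and> S *v b = (b \<bullet> (S *v b)) *\<^sub>R b)"
proof (induction k)
  case 0 then show ?case by (intro exI[of _ "{}"]) auto
next
  case (Suc k)
  then obtain B where B: "finite B" "card B = k" "pairwise orthogonal B"
      and Bev: "\<And>b. b \<in> B \<Longrightarrow> norm b = 1 \<and> S *v b = (b \<bullet> (S *v b)) *\<^sub>R b" by auto
  define U where "U = {x. \<forall>b\<in>B. b \<bullet> x = 0}"
  have U: "subspace U" unfolding subspace_def U_def by (auto simp: inner_add_right)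
  have inv: "S *v x \<in> U" if "x \<in> U" for x
  proof -
    have "b \<bullet> (S *v x) = (b \<bullet> (S *v b)) * (b \<bullet> x)" if "b \<in> B" for b
      using inner_symmetric_matrix[OF sym, of b x] Bev[OF that] by (metis inner_scaleR_left)
    then show ?thesis using \<open>x \<in> U\<close> by (simp add: U_def)
  qed
  have "dim B < DIM(real^'n)" using dim_le_card'[OF B(1)] B(2) Suc.prems by simp
  then obtain x0 where "x0 \<noteq> 0" "\<And>y. y \<in> span B \<Longrightarrow> orthogonal x0 y"
    using orthogonal_to_subspace_exists by blast
  then have x0: "x0 \<in> U" "x0 \<noteq> 0"
    by (auto simp: U_def orthogonal_def inner_commute intro: span_base)
  obtain u where u: "u \<in> U" "norm u = 1"
    and umax: "\<And>y. y \<in> U \<Longrightarrow> y \<bullet> (S *v y) \<le> (u \<bullet> (S *v u)) * (y \<bullet> y)"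
    using rayleigh_quotient_attains_max[OF U x0] by blast
  have "u \<notin> B" using u by (auto simp: U_def dot_square_norm)
  then show ?case
    using B Bev u rayleigh_maximizer_is_eigenvector[OF sym U inv u umax]
    by (intro exI[of _ "insert u B"])
      (auto simp: pairwise_insert orthogonal_def[abs_def] U_def inner_commute)
qed

lemma symmetric_matrix_orthonormal_eigenbasis:
  fixes S :: "real^'n^'n"
  assumes "transpose S = S"
  obtains \<beta> :: "'n \<Rightarrow> real^'n" and \<mu>
  where "\<And>i j. \<beta> i \<bullet> \<beta> j = (if i = j then 1 else 0)" "\<And>i. S *v \<beta> i = \<mu> i *\<^sub>R \<beta> i"
proof -
  obtain B where B: "finite B" "card B = CARD('n)" "pairwise orthogonal B"
      and Bev: "\<And>b. b \<in> B \<Longrightarrow> norm b = 1 \<and> S *v b = (b \<bullet> (S *v b)) *\<^sub>R b"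
    using symmetric_matrix_orthonormal_eigenvectors[OF assms, of "CARD('n)"] by auto
  obtain \<beta> where \<beta>: "bij_betw \<beta> (UNIV::'n set) B"
    using finite_same_card_bij[of "UNIV::'n set" B] B by auto
  have "\<beta> i \<bullet> \<beta> j = (if i = j then 1 else 0)" for i j
  proof (cases "i = j")
    case True then show ?thesis using Bev \<beta> bij_betwE by (fastforce simp: dot_square_norm)
  next
    case False
    then have "\<beta> i \<noteq> \<beta> j" using \<beta> unfolding bij_betw_def inj_on_def by blast
    then show ?thesis using B(3) \<beta> bij_betwE False unfolding pairwise_def orthogonal_def by fastforce
  qed
  moreover have "S *v \<beta> i = (\<beta> i \<bullet> (S *v \<beta> i)) *\<^sub>R \<beta> i" for i using Bev \<beta> bij_betwE by blast
  ultimately show thesis by (rule that)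
qed

lemma transpose_mult_mult_columns:
  fixes \<beta> :: "'n \<Rightarrow> real^'n" and M :: "real^'n^'n"
  defines "P \<equiv> (\<chi> r i. \<beta> i $ r)"
  shows "(transpose P ** M ** P) $ i $ j = \<beta> i \<bullet> (M *v \<beta> j)"
proof -
  have "(transpose P ** M ** P) $ i $ j = (\<Sum>s\<in>UNIV. \<Sum>r\<in>UNIV. \<beta> i $ r * (M $ r $ s * \<beta> j $ s))"
    by (simp add: P_def matrix_matrix_mult_def transpose_def sum_distrib_right mult.assoc)
  also have "\<dots> = (\<Sum>r\<in>UNIV. \<beta> i $ r * (\<Sum>s\<in>UNIV. M $ r $ s * \<beta> j $ s))"
    by (subst sum.swap) (simp add: sum_distrib_left)
  also have "\<dots> = \<beta> i \<bullet> (M *v \<beta> j)"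
    by (simp add: inner_vec_def matrix_vector_mult_def)
  finally show ?thesis .
qed

text \<open>The matrix with columns \<open>\<beta> i\<close> is orthogonal and diagonalises \<open>mat t - S\<close>.\<close>
lemma det_orthonormal_eigenbasis:
  fixes S :: "real^'n^'n" and \<beta> :: "'n \<Rightarrow> real^'n"
  assumes orthonormal: "\<And>i j. \<beta> i \<bullet> \<beta> j = (if i = j then 1 else 0)"
    and eigen: "\<And>i. S *v \<beta> i = \<mu> i *\<^sub>R \<beta> i"
  shows "det (mat t - S) = (\<Prod>i\<in>UNIV. t - \<mu> i)"
proof -
  define P where "P = (\<chi> r i. (\<beta> i $ r :: real))"
  have "(transpose P ** P) $ i $ j = \<beta> i \<bullet> \<beta> j" for i j
    using transpose_mult_mult_columns[of \<beta> "mat 1" i j]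
    unfolding P_def matrix_mul_rid matrix_vector_mul_lid .
  then have "transpose P ** P = mat 1" by (simp add: vec_eq_iff orthonormal mat_def)
  then have detP: "det (transpose P) * det P = 1"
    using det_mul[of "transpose P" P] by simp
  have "(transpose P ** (mat t - S) ** P) $ i $ j = (if i = j then t - \<mu> i else 0)" for i j
  proof -
    have "(mat t - S) *v \<beta> j = (t - \<mu> j) *\<^sub>R \<beta> j"
      by (simp add: matrix_vector_mult_diff_rdistrib mat_mult_vector eigen scaleR_diff_left)
    then show ?thesis unfolding P_def transpose_mult_mult_columns by (simp add: orthonormal)
  qed
  then have diag: "transpose P ** (mat t - S) ** P = (\<chi> i j. if i = j then t - \<mu> i else 0)"
    by (simp add: vec_eq_iff)
  have "det (mat t - S) = det (transpose P) * det (mat t - S) * det P"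
    using detP by (simp add: algebra_simps)
  also have "\<dots> = det (\<chi> i j. if i = j then t - \<mu> i else (0::real))"
    by (simp only: det_mul[symmetric] diag)
  also have "\<dots> = (\<Prod>i\<in>UNIV. t - \<mu> i)" by (subst det_diagonal) auto
  finally show ?thesis .
qed

lemma diagonal_mult_mult_diagonal:
  fixes M :: "real^'n^'n"
  shows "(\<chi> i j. if i = j then a i else 0) ** M ** (\<chi> i j. if i = j then b i else 0)
    = (\<chi> i j. a i * M $ i $ j * b j)"
proof -
  have left: "((\<chi> i j. if i = j then a i else 0) ** M) $ i $ k = a i * M $ i $ k" for i k
  proof -
    have "((\<chi> i j. if i = j then a i else 0) ** M) $ i $ k = (\<Sum>l\<in>UNIV. if i = l then a i * M $ l $ k else 0)"
      unfolding matrix_matrix_mult_def by (simp only: vec_lambda_beta) (rule sum.cong, simp_all)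
    then show ?thesis by simp
  qed
  have "((\<chi> i j. if i = j then a i else 0) ** M ** (\<chi> i j. if i = j then b i else 0)) $ i $ j
      = (\<Sum>k\<in>UNIV. if k = j then a i * M $ i $ k * b j else 0)" for i j
    unfolding matrix_matrix_mult_def[of "(\<chi> i j. if i = j then a i else 0) ** M"]
    by (simp only: vec_lambda_beta left) (rule sum.cong, simp_all)
  then show ?thesis by (simp add: vec_eq_iff)
qed

lemma dim_vectors_supported_on:
  "dim {v::real^'n. \<forall>y. y \<notin> N \<longrightarrow> v $ y = 0} \<le> card N"
proof -
  let ?T = "{v::real^'n. \<forall>y. y \<notin> N \<longrightarrow> v $ y = 0}"
  have "?T \<subseteq> span ((\<lambda>y. axis y 1) ` N)"
  proof
    fix v assume v: "v \<in> ?T"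
    have "v = (\<Sum>y\<in>UNIV. v $ y *\<^sub>R axis y 1)"
      using basis_expansion[of v] by (simp add: scalar_mult_eq_scaleR)
    also have "\<dots> = (\<Sum>y\<in>N. v $ y *\<^sub>R axis y 1)"
      by (rule sum.mono_neutral_right) (use v in auto)
    also have "\<dots> \<in> span ((\<lambda>y. axis y 1) ` N)"
      by (intro span_sum span_scale span_base) auto
    finally show "v \<in> span ((\<lambda>y. axis y 1) ` N)" .
  qed
  then have "dim ?T \<le> card ((\<lambda>y. axis y (1::real)) ` N)" by (rule dim_le_card) simp
  also have "\<dots> \<le> card N" by (rule card_image_le) simp
  finally show ?thesis .
qed

lemma linear_inj_on_image_eq:
  fixes f :: "real^'n \<Rightarrow> real^'m"
  assumes "linear f" "inj_on f V" "subspace V" "subspace T" "f ` V \<subseteq> T" "dim T \<le> dim V"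
  shows "f ` V = T"
proof (rule subspace_dim_equal)
  show "subspace (f ` V)" using assms by (simp add: linear_subspace_image)
  have "inj_on f (span V)" using assms(2,3) by (metis span_eq_iff)
  then show "dim T \<le> dim (f ` V)" using assms(1,6) dim_image_eq[of f V] by simp
qed (use assms in auto)

section \<open>Characteristic polynomials\<close>

lemma poly_det: "poly (det M) t = det (\<chi> i j. poly (M $ i $ j) t)"
  unfolding det_def by (simp add: poly_sum poly_prod)

lemma poly_char_poly_mat: "poly (char_poly_mat A) t = det (mat t - A)"
proof -
  have "(\<chi> i j. poly ((\<chi> i j. (if i = j then [:0, 1:] else 0) - [:A $ i $ j:]) $ i $ j) t) = mat t - A"
    by (simp add: vec_eq_iff mat_def)
  then show ?thesis unfolding char_poly_mat_def poly_det by simp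
qed

lemma order_prod_linear_factors:
  "order a (prod_list (map (\<lambda>l. [:- l, 1:]) ls)) = count (mset ls) (a::real)"
proof (induction ls)
  case Nil
  then show ?case by (simp add: order_0I)
next
  case (Cons x ls)
  have "prod_list (map (\<lambda>l. [:- l, 1:]) ls) \<noteq> (0::real poly)"
    by (auto simp: prod_list_zero_iff)
  then have "[:- x, 1:] * prod_list (map (\<lambda>l. [:- l, 1:]) ls) \<noteq> 0"
    by (simp only: mult_eq_0_iff de_Morgan_disj) simp
  moreover have "order a [:- x, 1:] = (if a = x then 1 else 0)"
    using order_power_n_n[of x 1] by (auto intro: order_0I)
  ultimately show ?case using order_mult[of "[:- x, 1:]" _ a] Cons.IH by simp
qed

lemma sorted_linear_factors_unique:
  fixes ls ls' :: "real list"
  assumes "sorted ls" "sorted ls'"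
    and "prod_list (map (\<lambda>l. [:- l, 1:]) ls) = prod_list (map (\<lambda>l. [:- l, 1:]) ls')"
  shows "ls = ls'"
proof -
  have "mset ls = mset ls'"
    by (rule multiset_eqI) (metis order_prod_linear_factors assms(3))
  then have "sort ls' = ls" by (rule properties_for_sort) (rule assms(1))
  then show ?thesis using assms(2) by (simp add: sorted_sort_id)
qed

lemma the_sorted_char_poly_roots:
  fixes A :: "real^'n^'n"
  assumes "\<And>t. det (mat t - A) = (\<Prod>i\<in>UNIV. t - \<mu> i)"
  shows "(THE ls. sorted ls \<and> char_poly_mat A = prod_list (map (\<lambda>l. [:- l, 1:]) ls))
    = sorted_list_of_multiset (image_mset \<mu> (mset_set UNIV))"
proof -
  let ?ls = "sorted_list_of_multiset (image_mset \<mu> (mset_set UNIV))"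
  have "poly (char_poly_mat A) t = poly (prod_list (map (\<lambda>l. [:- l, 1:]) ?ls)) t" for t
  proof -
    have "prod_list (map (\<lambda>l. [:- l, 1:]) ?ls) = (\<Prod>l\<in>#image_mset \<mu> (mset_set UNIV). [:- l, 1:])"
      by (simp only: prod_mset_prod_list[symmetric] mset_map mset_sorted_list_of_multiset)
    then have "poly (prod_list (map (\<lambda>l. [:- l, 1:]) ?ls)) t = (\<Prod>l\<in>#image_mset \<mu> (mset_set UNIV). t - l)"
      by (simp add: poly_prod_mset)
    also have "\<dots> = (\<Prod>i\<in>UNIV. t - \<mu> i)"
      by (simp add: prod_unfold_prod_mset image_mset.compositionality comp_def)
    finally show ?thesis using assms by (simp add: poly_char_poly_mat)
  qed
  then have "char_poly_mat A = prod_list (map (\<lambda>l. [:- l, 1:]) ?ls)"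
    using poly_eq_poly_eq_iff by blast
  then show ?thesis
    by (intro the_equality) (auto intro: sorted_linear_factors_unique)
qed

lemma sorted_nth_le_length_filter:
  assumes "sorted xs" "n < length xs"
  shows "Suc n \<le> length (filter (\<lambda>x. x \<le> xs ! n) xs)"
proof -
  have "\<forall>x\<in>set (take (Suc n) xs). x \<le> xs ! n"
    using assms by (auto simp: in_set_conv_nth intro!: sorted_nth_mono)
  then have "filter (\<lambda>x. x \<le> xs ! n) (take (Suc n) xs) = take (Suc n) xs" by simp
  then have "Suc n = length (filter (\<lambda>x. x \<le> xs ! n) (take (Suc n) xs))" using assms(2) by simp
  also have "\<dots> \<le> length (filter (\<lambda>x. x \<le> xs ! n) (take (Suc n) xs @ drop (Suc n) xs))"
    by (simp only: filter_append length_append)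
  finally show ?thesis by simp
qed

lemma length_filter_sorted_image_mset:
  "length (filter P (sorted_list_of_multiset (image_mset \<mu> (mset_set (UNIV::'a::finite set)))))
    = card {i. P (\<mu> i)}"
proof -
  have "length (filter P (sorted_list_of_multiset (image_mset \<mu> (mset_set (UNIV::'a set)))))
      = size (mset (filter P (sorted_list_of_multiset (image_mset \<mu> (mset_set (UNIV::'a set))))))"
    by (rule size_mset[symmetric])
  then show ?thesis by (simp add: filter_mset_image_mset)
qed

lemma sum_if_mem_const: "(\<Sum>u\<in>(UNIV::'a::finite set). if u \<in> A then (c::real) else 0) = real (card A) * c"
  by (simp add: sum.If_cases)

definition delta :: "'a \<Rightarrow> 'a \<Rightarrow> real" where
  "delta z = (\<lambda>u. if u = z then 1 else 0)"

lemma sum_mult_delta: "(\<Sum>u\<in>(UNIV::'a::finite set). a u * delta z u) = a z"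
  by (simp add: delta_def if_distrib cong: if_cong)

section \<open>The calculus of \<open>\<Gamma>\<close> and \<open>\<Gamma>\<^sub>2\<close>\<close>

locale finite_weighted_graph =
  fixes w :: "'v::finite \<Rightarrow> 'v \<Rightarrow> real" and m :: "'v \<Rightarrow> real"
  assumes weighted_graph: "weighted_graph w m"
begin

lemma w_sym: "w x y = w y x"
  using weighted_graph unfolding weighted_graph_def by auto

lemma w_nonneg: "0 \<le> w x y"
  using weighted_graph unfolding weighted_graph_def by auto

lemma w_diag [simp]: "w x x = 0"
  using weighted_graph unfolding weighted_graph_def by auto

lemma m_pos: "0 < m x"
  using weighted_graph unfolding weighted_graph_def by auto

lemma m_nonzero [simp]: "m x \<noteq> 0"
  using m_pos[of x] by auto

lemma transition_nonneg: "0 \<le> w x y / m x"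
  by (intro divide_nonneg_pos w_nonneg m_pos)

lemma transition_pos_iff: "0 < w x y / m x \<longleftrightarrow> w x y \<noteq> 0"
  using w_nonneg[of x y] m_pos[of x] by (auto simp: less_le)

lemma adj_iff: "adj w x y \<longleftrightarrow> w x y \<noteq> 0"
  using w_nonneg[of x y] unfolding adj_def by auto

lemma Lap_eq: "Lap w m f x = (\<Sum>y\<in>UNIV. w x y / m x * (f y - f x))"
  unfolding Lap_def by (simp add: sum_distrib_left)

lemma Deg_eq: "Deg w m x = (\<Sum>y\<in>UNIV. w x y / m x)"
  unfolding Deg_def by (simp add: sum_distrib_left)

lemma Deg_pos:
  assumes "w x y \<noteq> 0"
  shows "0 < Deg w m x"
proof -
  have "0 < w x y / m x" using assms by (simp add: transition_pos_iff)
  also have "\<dots> \<le> Deg w m x"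
    unfolding Deg_eq by (rule member_le_sum) (auto intro: transition_nonneg)
  finally show ?thesis .
qed

lemma Gam_eq: "Gam w m f g x = (\<Sum>y\<in>UNIV. w x y / m x * (f y - f x) * (g y - g x)) / 2"
proof -
  have "Lap w m (\<lambda>z. f z * g z) x - f x * Lap w m g x - g x * Lap w m f x
      = (\<Sum>y\<in>UNIV. w x y / m x * (f y * g y - f x * g x) - f x * (w x y / m x * (g y - g x))
          - g x * (w x y / m x * (f y - f x)))"
    unfolding Lap_eq by (simp add: sum_subtractf sum_distrib_left)
  also have "\<dots> = (\<Sum>y\<in>UNIV. w x y / m x * (f y - f x) * (g y - g x))"
    by (rule sum.cong) (auto simp: field_simps)
  finally show ?thesis unfolding Gam_def by simp
qed

lemma Gam_sym: "Gam w m f g = Gam w m g f"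
  unfolding Gam_def by (auto simp: mult.commute)

lemma Gam_nonneg: "0 \<le> Gam w m f f x"
proof -
  have "0 \<le> w x y / m x * (f y - f x) * (f y - f x)" for y
    using transition_nonneg[of x y] by (metis mult.assoc mult_nonneg_nonneg zero_le_square)
  then show ?thesis unfolding Gam_eq by (simp add: sum_nonneg)
qed

lemma Lap_linear: "Lap w m (\<lambda>z. a * f z + b * g z) x = a * Lap w m f x + b * Lap w m g x"
proof -
  have "Lap w m (\<lambda>z. a * f z + b * g z) x
      = (\<Sum>y\<in>UNIV. a * (w x y / m x * (f y - f x)) + b * (w x y / m x * (g y - g x)))"
    unfolding Lap_eq by (rule sum.cong) (auto simp: field_simps)
  then show ?thesis unfolding Lap_eq by (simp add: sum.distrib sum_distrib_left)
qed

lemma Lap_scale: "Lap w m (\<lambda>z. a * f z) x = a * Lap w m f x"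
  using Lap_linear[of a f 0 f x] by simp

lemma Gam_linear_left:
  "Gam w m (\<lambda>z. a * f z + b * g z) h x = a * Gam w m f h x + b * Gam w m g h x"
proof -
  have "Gam w m (\<lambda>z. a * f z + b * g z) h x = (\<Sum>y\<in>UNIV. a * (w x y / m x * (f y - f x) * (h y - h x))
      + b * (w x y / m x * (g y - g x) * (h y - h x))) / 2"
    unfolding Gam_eq by (intro arg_cong[where f="\<lambda>t. t / 2"] sum.cong) (auto simp: field_simps)
  then show ?thesis unfolding Gam_eq by (simp add: sum.distrib sum_distrib_left add_divide_distrib)
qed

lemma Gam_linear_right:
  "Gam w m h (\<lambda>z. a * f z + b * g z) x = a * Gam w m h f x + b * Gam w m h g x"
  using Gam_linear_left[of a f b g h x] by (simp add: Gam_sym)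

lemma Gam2_sym: "Gam2 w m f g = Gam2 w m g f"
  unfolding Gam2_def by (auto simp: Gam_sym algebra_simps)

lemma Gam2_linear_left:
  "Gam2 w m (\<lambda>z. a * f z + b * g z) h x = a * Gam2 w m f h x + b * Gam2 w m g h x"
proof -
  have Gam_fun: "Gam w m (\<lambda>z. a * f z + b * g z) h = (\<lambda>x. a * Gam w m f h x + b * Gam w m g h x)"
    using Gam_linear_left by auto
  have Lap_fun: "Lap w m (\<lambda>z. a * f z + b * g z) = (\<lambda>x. a * Lap w m f x + b * Lap w m g x)"
    using Lap_linear by auto
  show ?thesis
    unfolding Gam2_def Gam_fun Lap_fun Lap_linear Gam_linear_left Gam_linear_right
    by (simp add: algebra_simps add_divide_distrib diff_divide_distrib)
qed

lemma Gam2_linear_right: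
  "Gam2 w m h (\<lambda>z. a * f z + b * g z) x = a * Gam2 w m h f x + b * Gam2 w m h g x"
  using Gam2_linear_left[of a f b g h x] Gam2_sym[of h] by metis

lemma Gam_quadratic:
  "Gam w m (\<lambda>z. f z + t * g z) (\<lambda>z. f z + t * g z) x
    = Gam w m f f x + 2 * t * Gam w m f g x + t^2 * Gam w m g g x"
  using Gam_linear_left[of 1 f t g "\<lambda>z. f z + t * g z" x] Gam_linear_right[of f 1 f t g x]
    Gam_linear_right[of g 1 f t g x] Gam_sym[of g f]
  by (simp add: power2_eq_square algebra_simps)

lemma Gam2_quadratic:
  "Gam2 w m (\<lambda>z. f z + t * g z) (\<lambda>z. f z + t * g z) x
    = Gam2 w m f f x + 2 * t * Gam2 w m f g x + t^2 * Gam2 w m g g x"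
  using Gam2_linear_left[of 1 f t g "\<lambda>z. f z + t * g z" x] Gam2_linear_right[of f 1 f t g x]
    Gam2_linear_right[of g 1 f t g x] Gam2_sym[of g f]
  by (simp add: power2_eq_square algebra_simps)

lemma sum_measure_Lap: "(\<Sum>x\<in>UNIV. m x * Lap w m f x) = 0"
proof -
  have "(\<Sum>x\<in>UNIV. m x * Lap w m f x)
      = (\<Sum>x\<in>UNIV. \<Sum>y\<in>UNIV. w x y * f y) - (\<Sum>x\<in>UNIV. \<Sum>y\<in>UNIV. w x y * f x)"
    unfolding Lap_def by (simp add: sum_subtractf algebra_simps)
  also have "(\<Sum>x\<in>UNIV. \<Sum>y\<in>UNIV. w x y * f y) = (\<Sum>y\<in>UNIV. \<Sum>x\<in>UNIV. w y x * f y)"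
    by (subst sum.swap) (simp add: w_sym)
  finally show ?thesis by simp
qed

lemma Lap_self_adjoint:
  "(\<Sum>x\<in>UNIV. m x * f x * Lap w m g x) = (\<Sum>x\<in>UNIV. m x * g x * Lap w m f x)"
proof -
  have expand: "(\<Sum>x\<in>UNIV. m x * f x * Lap w m g x)
      = (\<Sum>x\<in>UNIV. \<Sum>y\<in>UNIV. w x y * f x * g y) - (\<Sum>x\<in>UNIV. \<Sum>y\<in>UNIV. w x y * f x * g x)" for f g
    unfolding Lap_def by (simp add: sum_subtractf sum_distrib_left algebra_simps)
  have "(\<Sum>x\<in>UNIV. \<Sum>y\<in>UNIV. w x y * f x * g y) = (\<Sum>x\<in>UNIV. \<Sum>y\<in>UNIV. w x y * g x * f y)"
    by (subst sum.swap) (simp add: w_sym mult.commute mult.left_commute)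
  then show ?thesis unfolding expand by (simp add: mult.commute mult.left_commute)
qed

lemma green_formula: "(\<Sum>x\<in>UNIV. m x * Gam w m f g x) = - (\<Sum>x\<in>UNIV. m x * f x * Lap w m g x)"
proof -
  have "m x * Gam w m f g x = (m x * Lap w m (\<lambda>z. f z * g z) x - m x * f x * Lap w m g x
      - m x * g x * Lap w m f x) / 2" for x
    unfolding Gam_def by (simp add: algebra_simps)
  then have "(\<Sum>x\<in>UNIV. m x * Gam w m f g x) = (\<Sum>x\<in>UNIV. (m x * Lap w m (\<lambda>z. f z * g z) x
      - m x * f x * Lap w m g x - m x * g x * Lap w m f x) / 2)"
    by (intro sum.cong) auto
  then have "(\<Sum>x\<in>UNIV. m x * Gam w m f g x) = ((\<Sum>x\<in>UNIV. m x * Lap w m (\<lambda>z. f z * g z) x)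
      - (\<Sum>x\<in>UNIV. m x * f x * Lap w m g x) - (\<Sum>x\<in>UNIV. m x * g x * Lap w m f x)) / 2"
    by (simp add: sum_subtractf sum_divide_distrib[symmetric])
  then show ?thesis using sum_measure_Lap Lap_self_adjoint[of f g] by simp
qed

lemma eigenfunction_energy:
  assumes eig: "\<And>x. Lap w m f x = - l * f x"
  shows "(\<Sum>x\<in>UNIV. m x * Gam w m f f x) = l * (\<Sum>x\<in>UNIV. m x * (f x)^2)"
    and "(\<Sum>x\<in>UNIV. m x * Gam2 w m f f x) = l^2 * (\<Sum>x\<in>UNIV. m x * (f x)^2)"
proof -
  show "(\<Sum>x\<in>UNIV. m x * Gam w m f f x) = l * (\<Sum>x\<in>UNIV. m x * (f x)^2)"
    unfolding green_formula eig by (simp add: sum_distrib_left power2_eq_square algebra_simps sum_negf)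
  have "Lap w m f = (\<lambda>z. (-l) * f z)" using eig by auto
  then have LL: "Lap w m (Lap w m f) x = l^2 * f x" for x
    using Lap_scale[of "-l" f x] eig[of x] by (simp add: power2_eq_square)
  have "m x * Gam2 w m f f x = (m x * Lap w m (Gam w m f f) x) / 2 - m x * Gam w m f (Lap w m f) x" for x
    unfolding Gam2_def by (simp add: field_simps)
  then have "(\<Sum>x\<in>UNIV. m x * Gam2 w m f f x)
      = (\<Sum>x\<in>UNIV. m x * Lap w m (Gam w m f f) x) / 2 - (\<Sum>x\<in>UNIV. m x * Gam w m f (Lap w m f) x)"
    by (simp add: sum_subtractf sum_divide_distrib)
  also have "\<dots> = (\<Sum>x\<in>UNIV. m x * f x * Lap w m (Lap w m f) x)"
    unfolding sum_measure_Lap green_formula by simp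
  also have "\<dots> = l^2 * (\<Sum>x\<in>UNIV. m x * (f x)^2)"
    unfolding LL by (simp add: sum_distrib_left power2_eq_square algebra_simps)
  finally show "(\<Sum>x\<in>UNIV. m x * Gam2 w m f f x) = l^2 * (\<Sum>x\<in>UNIV. m x * (f x)^2)" .
qed

lemma weighted_norm_pos:
  assumes "f x0 \<noteq> 0"
  shows "0 < (\<Sum>x\<in>UNIV. m x * (f x)^2)"
proof -
  have "0 < m x0 * (f x0)^2" using assms m_pos by auto
  also have "\<dots> \<le> (\<Sum>x\<in>UNIV. m x * (f x)^2)"
    by (rule member_le_sum) (auto intro!: mult_nonneg_nonneg less_imp_le[OF m_pos])
  finally show ?thesis .
qed

lemma lichnerowicz:
  assumes cd: "CD_inf w m K" and eig: "\<And>x. Lap w m f x = - l * f x" and nz: "f x0 \<noteq> 0"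
  shows "l = 0 \<or> K \<le> l"
proof -
  let ?s = "\<Sum>x\<in>UNIV. m x * (f x)^2"
  have s: "0 < ?s" using weighted_norm_pos[of f x0, OF nz] .
  have "0 \<le> (\<Sum>x\<in>UNIV. m x * Gam w m f f x)"
    by (auto intro!: sum_nonneg mult_nonneg_nonneg less_imp_le[OF m_pos] Gam_nonneg)
  then have "0 \<le> l" using eigenfunction_energy(1)[OF eig] s by (simp add: zero_le_mult_iff)
  have "(\<Sum>x\<in>UNIV. m x * (K * Gam w m f f x)) \<le> (\<Sum>x\<in>UNIV. m x * Gam2 w m f f x)"
    using cd unfolding CD_inf_def by (auto intro!: sum_mono mult_left_mono less_imp_le[OF m_pos])
  moreover have "(\<Sum>x\<in>UNIV. m x * (K * Gam w m f f x)) = K * (\<Sum>x\<in>UNIV. m x * Gam w m f f x)"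
    by (simp add: sum_distrib_left algebra_simps)
  ultimately have "K * (l * ?s) \<le> l^2 * ?s"
    using eigenfunction_energy[OF eig] by simp
  then have "K * l \<le> l * l" using s by (simp add: power2_eq_square mult.assoc[symmetric] mult_le_cancel_right)
  then show ?thesis using \<open>0 \<le> l\<close> by (cases "l = 0") (auto simp: mult_le_cancel_right)
qed

text \<open>Equality in \<open>CD(K,\<infinity>)\<close> holds for \<open>f\<close> after integration, hence pointwise; the
  nonnegative quadratic form \<open>\<Gamma>\<^sub>2 - K\<Gamma>\<close> then vanishes on \<open>f\<close> together with its polarisation.\<close>
lemma CD_equality_for_eigenfunction:
  assumes cd: "CD_inf w m K" and eig: "\<And>x. Lap w m f x = - K * f x"
  shows "Gam2 w m f h x = K * Gam w m f h x"
proof -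
  let ?Q = "\<lambda>g y. Gam2 w m g g y - K * Gam w m g g y"
  have Q_nonneg: "0 \<le> ?Q g y" for g y
    using cd unfolding CD_inf_def by auto
  have "(\<Sum>y\<in>UNIV. m y * ?Q f y)
      = (\<Sum>y\<in>UNIV. m y * Gam2 w m f f y) - K * (\<Sum>y\<in>UNIV. m y * Gam w m f f y)"
    by (simp add: algebra_simps sum_subtractf sum_distrib_left)
  also have "\<dots> = 0" unfolding eigenfunction_energy[OF eig] by (simp add: power2_eq_square)
  finally have "(\<Sum>y\<in>UNIV. m y * ?Q f y) = 0" .
  then have "\<forall>y\<in>UNIV. m y * ?Q f y = 0"
    by (subst (asm) sum_nonneg_eq_0_iff) (auto intro: mult_nonneg_nonneg less_imp_le[OF m_pos] Q_nonneg)
  then have Qf: "?Q f x = 0" using m_pos[of x] by simp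
  have "0 \<le> 2 * t * (Gam2 w m f h x - K * Gam w m f h x) + t^2 * ?Q h x" for t
    using Q_nonneg[of "\<lambda>z. f z + t * h z" x] Qf
    unfolding Gam2_quadratic Gam_quadratic by (simp add: algebra_simps)
  then have "Gam2 w m f h x - K * Gam w m f h x = 0" by (rule nonneg_quadratic_imp_linear_coeff_zero)
  then show ?thesis by simp
qed

definition two_step :: "'v \<Rightarrow> 'v \<Rightarrow> real" where
  "two_step x z = (\<Sum>y\<in>UNIV. w x y / m x * (w y z / m y))"

lemma two_step_nonneg: "0 \<le> two_step x z"
  unfolding two_step_def by (intro sum_nonneg mult_nonneg_nonneg transition_nonneg)

lemma two_step_pos:
  assumes "w x y \<noteq> 0" "w y z \<noteq> 0"
  shows "0 < two_step x z"
proof -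
  have "0 < w x y / m x * (w y z / m y)"
    using assms by (intro mult_pos_pos) (simp_all add: transition_pos_iff)
  also have "\<dots> \<le> two_step x z"
    unfolding two_step_def
    by (rule member_le_sum) (use mult_nonneg_nonneg[OF transition_nonneg transition_nonneg] in auto)
  finally show ?thesis .
qed

lemma Lap_delta: "Lap w m (delta z) u = w u z / m u - (if u = z then Deg w m u else 0)"
proof -
  have "Lap w m (delta z) u = (\<Sum>v\<in>UNIV. w u v / m u * delta z v) - (\<Sum>v\<in>UNIV. w u v / m u * delta z u)"
    unfolding Lap_eq by (simp add: sum_subtractf algebra_simps)
  then show ?thesis unfolding sum_mult_delta Deg_eq by (simp add: delta_def sum_distrib_right)
qed

lemma Gam_delta:
  "Gam w m f (delta z) u = (if u = z then - Lap w m f u / 2 else w u z / m u * (f z - f u) / 2)"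
proof (cases "u = z")
  case True
  have "(\<Sum>v\<in>UNIV. w u v / m u * (f v - f u) * (delta z v - delta z u))
      = (\<Sum>v\<in>UNIV. - (w u v / m u * (f v - f u)))"
    by (rule sum.cong) (auto simp: delta_def True)
  then show ?thesis unfolding Gam_eq Lap_eq using True by (simp add: sum_negf)
next
  case False
  have "(\<Sum>v\<in>UNIV. w u v / m u * (f v - f u) * (delta z v - delta z u))
      = (\<Sum>v\<in>UNIV. w u v / m u * (f v - f u) * delta z v)"
    by (rule sum.cong) (auto simp: delta_def False)
  then show ?thesis unfolding Gam_eq sum_mult_delta using False by simp
qed

lemma Gam_delta_left:
  "Gam w m (delta z) f u = (if u = z then - Lap w m f u / 2 else w u z / m u * (f z - f u) / 2)"
  using Gam_delta Gam_sym by metis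

lemma Gam2_delta_far:
  assumes zx: "z \<noteq> x" and wxz: "w x z = 0"
  shows "Gam2 w m f (delta z) x
    = (\<Sum>y\<in>UNIV. w x y / m x * (w y z / m y) * (f z - 2 * f y + f x)) / 4"
proof -
  have "Gam w m f (delta z) x = 0" using zx wxz by (simp add: Gam_delta)
  then have "Lap w m (Gam w m f (delta z)) x = (\<Sum>y\<in>UNIV. w x y / m x * Gam w m f (delta z) y)"
    unfolding Lap_eq by simp
  also have "\<dots> = (\<Sum>y\<in>UNIV. w x y / m x * (w y z / m y * (f z - f y)) / 2)"
    by (rule sum.cong) (auto simp: Gam_delta wxz)
  finally have L1: "Lap w m (Gam w m f (delta z)) x
      = (\<Sum>y\<in>UNIV. w x y / m x * (w y z / m y * (f z - f y))) / 2"
    by (simp add: sum_divide_distrib)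
  have L2: "Gam w m f (Lap w m (delta z)) x
      = (\<Sum>y\<in>UNIV. w x y / m x * (f y - f x) * (w y z / m y)) / 2"
    unfolding Gam_eq
    by (intro arg_cong[where f="\<lambda>t. t / 2"] sum.cong) (auto simp: Lap_delta wxz zx zx[symmetric])
  have L3: "Gam w m (delta z) (Lap w m f) x = 0"
    unfolding Gam_delta_left using zx wxz by simp
  have "Gam2 w m f (delta z) x = ((\<Sum>y\<in>UNIV. w x y / m x * (w y z / m y * (f z - f y)))
      - (\<Sum>y\<in>UNIV. w x y / m x * (f y - f x) * (w y z / m y))) / 4"
    unfolding Gam2_def L1 L2 L3 by (simp add: field_simps)
  also have "\<dots> = (\<Sum>y\<in>UNIV. w x y / m x * (w y z / m y) * (f z - 2 * f y + f x)) / 4"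
    by (simp add: sum_subtractf[symmetric], intro arg_cong[where f="\<lambda>t. t / 4"] sum.cong)
      (auto simp: field_simps)
  finally show ?thesis .
qed

lemma Lap_Gam_delta_near:
  assumes xy: "w x y \<noteq> 0" and grad: "\<And>v. w x v \<noteq> 0 \<Longrightarrow> g v = g x + 1"
    and eig: "\<And>u. Lap w m g u = - K * g u"
  shows "Lap w m (Gam w m g (delta y)) x = w x y / m x * (K * g y / 2) - Deg w m x * (w x y / m x / 2)"
proof -
  have gy: "g y = g x + 1" using grad xy by auto
  have "w x u / m x * Gam w m g (delta y) u = (if u = y then w x y / m x * (K * g y / 2) else 0)" for u
    using grad[of u] gy by (cases "w x u = 0") (auto simp: Gam_delta eig)
  then have near: "(\<Sum>u\<in>UNIV. w x u / m x * Gam w m g (delta y) u) = w x y / m x * (K * g y / 2)"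
    by simp
  have at_x: "Gam w m g (delta y) x = w x y / m x / 2"
    using xy gy by (auto simp: Gam_delta)
  have "Lap w m (Gam w m g (delta y)) x = (\<Sum>u\<in>UNIV. w x u / m x * Gam w m g (delta y) u)
      - (\<Sum>u\<in>UNIV. w x u / m x) * Gam w m g (delta y) x"
    unfolding Lap_eq by (simp add: sum_subtractf right_diff_distrib sum_distrib_right)
  then show ?thesis unfolding near at_x Deg_eq by simp
qed

lemma Gam_Lap_delta_near:
  assumes xy: "w x y \<noteq> 0" and grad: "\<And>v. w x v \<noteq> 0 \<Longrightarrow> g v = g x + 1"
  shows "Gam w m g (Lap w m (delta y)) x
    = (two_step x y - w x y / m x * Deg w m y - Deg w m x * (w x y / m x)) / 2"
proof -
  have "w x u / m x * (g u - g x) * (Lap w m (delta y) u - Lap w m (delta y) x)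
      = w x u / m x * (w u y / m u) - (if u = y then w x y / m x * Deg w m y else 0)
        - w x u / m x * (w x y / m x)" for u
    using xy grad[of u] by (cases "w x u = 0") (auto simp: Lap_delta algebra_simps)
  then show ?thesis
    unfolding Gam_eq two_step_def
    by (simp add: sum_subtractf Deg_eq sum_distrib_right sum_divide_distrib[symmetric])
qed

lemma Gam2_delta_near:
  assumes xy: "w x y \<noteq> 0" and grad: "\<And>v. w x v \<noteq> 0 \<Longrightarrow> g v = g x + 1"
    and eig: "\<And>u. Lap w m g u = - K * g u"
  shows "Gam2 w m g (delta y) x = (K * (w x y / m x) * g y - two_step x y
    + w x y / m x * Deg w m y + K * (w x y / m x)) / 4"
proof -
  have Gam_delta_Lap: "Gam w m (delta y) (Lap w m g) x = - K * (w x y / m x) / 2"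
    using xy grad[of y] by (auto simp: Gam_delta_left eig algebra_simps)
  have Lap_Gam: "Lap w m (Gam w m g (delta y)) x = w x y / m x * (K * g y / 2) - Deg w m x * (w x y / m x / 2)"
    using xy grad eig by (rule Lap_Gam_delta_near)
  have Gam_Lap: "Gam w m g (Lap w m (delta y)) x
      = (two_step x y - w x y / m x * Deg w m y - Deg w m x * (w x y / m x)) / 2"
    using xy grad by (rule Gam_Lap_delta_near)
  show ?thesis unfolding Gam2_def Lap_Gam Gam_Lap Gam_delta_Lap by (simp add: field_simps)
qed

section \<open>The spectrum of the Laplacian\<close>

text \<open>The conjugate \<open>diag(\<surd>m) (negLap_matrix w m) diag(\<surd>m)\<^sup>-\<^sup>1\<close>: a symmetric matrix whose eigenvectors
  \<open>v\<close> correspond to the eigenfunctions \<open>fun_of_vec v\<close> of \<open>-\<Delta>\<close>.\<close>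
definition sym_Lap_matrix :: "real^'v^'v" where
  "sym_Lap_matrix = (\<chi> x y. (if x = y then Deg w m x else 0) - w x y / (sqrt (m x) * sqrt (m y)))"

definition fun_of_vec :: "real^'v \<Rightarrow> 'v \<Rightarrow> real" where
  "fun_of_vec v y = v $ y / sqrt (m y)"

lemma sqrt_m_pos: "0 < sqrt (m x)"
  using m_pos by simp

lemma fun_of_vec_eq_0_iff: "fun_of_vec v = (\<lambda>_. 0) \<longleftrightarrow> v = 0"
  using sqrt_m_pos by (auto simp: fun_of_vec_def fun_eq_iff vec_eq_iff)

lemma fun_of_vec_diff: "fun_of_vec (u - v) y = fun_of_vec u y - fun_of_vec v y"
  by (simp add: fun_of_vec_def diff_divide_distrib)

lemma sym_Lap_matrix_symmetric: "transpose sym_Lap_matrix = sym_Lap_matrix"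
  by (simp add: vec_eq_iff sym_Lap_matrix_def transpose_def w_sym mult.commute)

lemma negLap_matrix_entry:
  "negLap_matrix w m $ x $ y = (if x = y then Deg w m x else 0) - w x y / m x"
  using Lap_delta[of y x] unfolding negLap_matrix_def delta_def by simp

lemma det_negLap_matrix: "det (mat t - negLap_matrix w m) = det (mat t - sym_Lap_matrix)"
proof -
  let ?D = "(\<chi> i j. if i = j then sqrt (m i) else 0) :: real^'v^'v"
  let ?E = "(\<chi> i j. if i = j then 1 / sqrt (m i) else 0) :: real^'v^'v"
  have "sqrt (m i) * (mat t - negLap_matrix w m) $ i $ j * (1 / sqrt (m j)) = (mat t - sym_Lap_matrix) $ i $ j"
    for i j
  proof (cases "i = j")
    case True then show ?thesis using sqrt_m_pos[of i] by (simp add: mat_def negLap_matrix_entry sym_Lap_matrix_def)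
  next
    case False
    have "sqrt (m i) * sqrt (m i) = m i" using m_pos[of i] by simp
    then have "sqrt (m i) * (w i j / m i) * (1 / sqrt (m j)) = w i j / (sqrt (m i) * sqrt (m j))"
      using sqrt_m_pos[of i] sqrt_m_pos[of j] by (simp add: field_simps)
    then show ?thesis using False by (simp add: mat_def negLap_matrix_entry sym_Lap_matrix_def)
  qed
  then have conj: "?D ** (mat t - negLap_matrix w m) ** ?E = mat t - sym_Lap_matrix"
    unfolding diagonal_mult_mult_diagonal by (simp add: vec_eq_iff)
  have "det ?D = (\<Prod>i\<in>UNIV. sqrt (m i))" "det ?E = (\<Prod>i\<in>UNIV. 1 / sqrt (m i))"
    by (subst det_diagonal; simp)+
  then have "det ?D * det ?E = (\<Prod>i\<in>UNIV. sqrt (m i) * (1 / sqrt (m i)))"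
    by (simp only: prod.distrib)
  also have "\<dots> = 1" using sqrt_m_pos by (intro prod.neutral) (simp add: less_imp_neq[symmetric])
  finally have "det ?D * det ?E = 1" .
  moreover have "det (mat t - sym_Lap_matrix) = det ?D * det (mat t - negLap_matrix w m) * det ?E"
    unfolding conj[symmetric] by (simp only: det_mul)
  ultimately show ?thesis by (simp add: algebra_simps)
qed

lemma sym_Lap_matrix_mult: "(sym_Lap_matrix *v v) $ x = - sqrt (m x) * Lap w m (fun_of_vec v) x"
proof -
  have "(sym_Lap_matrix *v v) $ x = (\<Sum>y\<in>UNIV. (if x = y then Deg w m x * v $ y else 0)
      - w x y / (sqrt (m x) * sqrt (m y)) * v $ y)"
    unfolding sym_Lap_matrix_def matrix_vector_mult_def by (auto intro: sum.cong simp: left_diff_distrib)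
  also have "\<dots> = Deg w m x * v $ x - (\<Sum>y\<in>UNIV. w x y / (sqrt (m x) * sqrt (m y)) * v $ y)"
    by (simp add: sum_subtractf)
  also have "\<dots> = - sqrt (m x) * Lap w m (fun_of_vec v) x"
  proof -
    have L: "Lap w m (fun_of_vec v) x
        = (\<Sum>y\<in>UNIV. w x y / m x * fun_of_vec v y) - Deg w m x * fun_of_vec v x"
      unfolding Lap_eq Deg_eq by (simp add: right_diff_distrib sum_subtractf sum_distrib_right)
    have "sqrt (m x) * sqrt (m x) = m x" using m_pos[of x] by simp
    then have "sqrt (m x) * (w x y / m x * fun_of_vec v y) = w x y / (sqrt (m x) * sqrt (m y)) * v $ y" for y
      using sqrt_m_pos[of x] sqrt_m_pos[of y] by (simp add: fun_of_vec_def field_simps)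
    then have A: "sqrt (m x) * (\<Sum>y\<in>UNIV. w x y / m x * fun_of_vec v y)
        = (\<Sum>y\<in>UNIV. w x y / (sqrt (m x) * sqrt (m y)) * v $ y)"
      by (simp add: sum_distrib_left)
    have V: "sqrt (m x) * fun_of_vec v x = v $ x"
      using sqrt_m_pos[of x] by (simp add: fun_of_vec_def)
    have "- sqrt (m x) * Lap w m (fun_of_vec v) x
        = - (sqrt (m x) * (\<Sum>y\<in>UNIV. w x y / m x * fun_of_vec v y)) + Deg w m x * (sqrt (m x) * fun_of_vec v x)"
      unfolding L by (simp add: algebra_simps)
    then show ?thesis unfolding A V by simp
  qed
  finally show ?thesis .
qed

lemma Lap_fun_of_eigenvector:
  assumes "sym_Lap_matrix *v v = l *\<^sub>R v"
  shows "Lap w m (fun_of_vec v) x = - l * fun_of_vec v x"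
proof -
  have "- sqrt (m x) * Lap w m (fun_of_vec v) x = l * v $ x"
    using sym_Lap_matrix_mult[of v x] assms by simp
  then show ?thesis using sqrt_m_pos[of x] by (simp add: fun_of_vec_def field_simps)
qed

lemma eigenvalues_eq_eigenbasis:
  fixes \<beta> :: "'v \<Rightarrow> real^'v"
  assumes "\<And>i j. \<beta> i \<bullet> \<beta> j = (if i = j then 1 else 0)"
    and "\<And>i. sym_Lap_matrix *v \<beta> i = \<mu> i *\<^sub>R \<beta> i"
  shows "eigenvalues w m = sorted_list_of_multiset (image_mset \<mu> (mset_set UNIV))"
  unfolding eigenvalues_def
  by (rule the_sorted_char_poly_roots)
    (simp add: det_negLap_matrix det_orthonormal_eigenbasis[OF assms])

lemma deg_eq_card: "deg w x = card {y. w x y \<noteq> 0}"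
  unfolding deg_def by (rule arg_cong[where f=card]) (auto simp: adj_iff w_sym)

lemma deg_le_deg_max: "deg w x \<le> deg_max w"
  unfolding deg_max_def by (rule Max_ge) auto

lemma deg_max_less_card: "deg_max w < CARD('v)"
proof -
  have "deg w x < CARD('v)" for x
  proof -
    have "deg w x \<le> card (UNIV - {x} :: 'v set)"
      unfolding deg_def by (intro card_mono) (auto simp: adj_iff)
    then have "deg w x \<le> CARD('v) - 1" by (simp add: card_Diff_singleton)
    moreover have "0 < CARD('v)" by (simp add: finite_UNIV_card_ge_0)
    ultimately show ?thesis by linarith
  qed
  moreover have "deg_max w \<in> range (deg w)" unfolding deg_max_def by (rule Max_in) auto
  ultimately show ?thesis by auto
qed

end

section \<open>Consequences of \<open>CD(K,\<infinity>)\<close>\<close>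

locale cd_graph = finite_weighted_graph w m for w :: "'v::finite \<Rightarrow> 'v \<Rightarrow> real" and m +
  fixes K :: real
  assumes connected: "connected_graph w" and K_pos: "0 < K" and CD: "CD_inf w m K"
begin

lemma connected_induct:
  assumes "x \<in> C" and step: "\<And>a b. a \<in> C \<Longrightarrow> adj w a b \<Longrightarrow> b \<in> C"
  shows "y \<in> C"
proof -
  obtain n where "(adj w ^^ n) x y" using connected unfolding connected_graph_def by blast
  then show ?thesis
  proof (induction n arbitrary: y)
    case 0 then show ?case using assms(1) by simp
  next
    case (Suc n)
    from Suc.prems obtain z where "(adj w ^^ n) x z" "adj w z y" by (rule relpowp_Suc_E)
    then show ?case using Suc.IH step by blast
  qed
qed

lemma gdist_path: "(adj w ^^ gdist w z x0) z x0"
proof -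
  obtain n where "(adj w ^^ n) z x0" using connected unfolding connected_graph_def by blast
  then show ?thesis unfolding gdist_def by (rule LeastI)
qed

lemma gdist_le: "(adj w ^^ n) z x0 \<Longrightarrow> gdist w z x0 \<le> n"
  unfolding gdist_def by (rule Least_le)

lemma gdist_eq_0_iff: "gdist w z x0 = 0 \<longleftrightarrow> z = x0"
  using gdist_path[of z x0] gdist_le[of 0 x0 x0] by auto

lemma gdist_self: "gdist w x x = 0"
  by (simp add: gdist_eq_0_iff)

lemma gdist_adj_le: "adj w z u \<Longrightarrow> gdist w z x0 \<le> gdist w u x0 + 1"
  using gdist_le[OF relpowp_Suc_I2[OF _ gdist_path[of u x0]], of z] by simp

lemma gdist_edge: "w z u \<noteq> 0 \<Longrightarrow> gdist w u x0 \<le> gdist w z x0 + 1 \<and> gdist w z x0 \<le> gdist w u x0 + 1"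
  using gdist_adj_le[of z u x0] gdist_adj_le[of u z x0] by (auto simp: adj_iff w_sym)

lemma gdist_predecessor:
  assumes "0 < gdist w z x0"
  obtains v where "w z v \<noteq> 0" "gdist w v x0 + 1 = gdist w z x0"
proof -
  obtain k where k: "gdist w z x0 = Suc k" using assms by (cases "gdist w z x0") auto
  then have "(adj w ^^ Suc k) z x0" using gdist_path[of z x0] by simp
  then obtain v where v: "adj w z v" "(adj w ^^ k) v x0" using relpowp_Suc_D2 by metis
  then have "gdist w v x0 + 1 = gdist w z x0"
    using gdist_le[OF v(2)] gdist_adj_le[OF v(1), of x0] k by simp
  then show thesis using v(1) that by (simp add: adj_iff)
qed

lemma harmonic_imp_constant:
  assumes harmonic: "\<And>x. Lap w m f x = 0"
  shows "f y = f x"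
proof -
  have "(\<Sum>z\<in>UNIV. m z * Gam w m f f z) = 0" unfolding green_formula harmonic by simp
  then have "\<forall>z\<in>UNIV. m z * Gam w m f f z = 0"
    by (subst (asm) sum_nonneg_eq_0_iff) (auto intro!: mult_nonneg_nonneg less_imp_le[OF m_pos] Gam_nonneg)
  then have sum0: "(\<Sum>y\<in>UNIV. w a y / m a * (f y - f a) * (f y - f a)) = 0" for a
    using m_pos[of a] unfolding Gam_eq by simp
  have nonneg: "0 \<le> w a y / m a * (f y - f a) * (f y - f a)" for a y
    using transition_nonneg[of a y] by (metis mult.assoc mult_nonneg_nonneg zero_le_square)
  have "\<forall>y\<in>UNIV. w a y / m a * (f y - f a) * (f y - f a) = 0" for a
    using sum0[of a] by (subst (asm) sum_nonneg_eq_0_iff) (use nonneg in auto)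
  then have zero: "w a b / m a * (f b - f a) * (f b - f a) = 0" for a b by (meson UNIV_I)
  have step: "f b = f a" if "adj w a b" for a b
    using zero[of a b] that by (simp add: adj_iff)
  have "y \<in> {z. f z = f x}" by (rule connected_induct[of x]) (auto dest: step)
  then show ?thesis by simp
qed

lemma second_differences_vanish:
  assumes eig: "\<And>u. Lap w m f u = - K * f u" and "z \<noteq> x" "w x z = 0"
  shows "(\<Sum>y\<in>UNIV. w x y / m x * (w y z / m y) * (f z - 2 * f y + f x)) = 0"
  using CD_equality_for_eigenfunction[OF CD eig, of "delta z" x] Gam2_delta_far[OF assms(2,3), of f]
  by (simp add: Gam_delta assms(2,3) assms(2)[symmetric])

lemma eigenfunction_two_steps:
  assumes eig: "\<And>u. Lap w m f u = - K * f u" and "z \<noteq> x" "w x z = 0"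
    and middle: "\<And>v. w x v \<noteq> 0 \<Longrightarrow> w v z \<noteq> 0 \<Longrightarrow> f v = f x + c"
    and path: "w x b \<noteq> 0" "w b z \<noteq> 0"
  shows "f z = f x + 2 * c"
proof -
  have "w x y / m x * (w y z / m y) * (f z - 2 * f y + f x) = (f z - f x - 2 * c) * (w x y / m x * (w y z / m y))" for y
    using middle[of y] by (cases "w x y = 0"; cases "w y z = 0") (auto simp: algebra_simps)
  then have "(\<Sum>y\<in>UNIV. w x y / m x * (w y z / m y) * (f z - 2 * f y + f x)) = (f z - f x - 2 * c) * two_step x z"
    unfolding two_step_def sum_distrib_left by (intro sum.cong) auto
  then have "(f z - f x - 2 * c) * two_step x z = 0"
    using second_differences_vanish[OF eig assms(2,3)] by simp
  then show ?thesis using two_step_pos[OF path] by simp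
qed

text \<open>If \<open>f\<close> is constant on the neighbourhood of one vertex, then by
  \<open>eigenfunction_two_steps\<close> it is constant on the neighbourhood of every neighbour; by
  connectedness \<open>f\<close> is constant, and a constant \<open>K\<close>-eigenfunction is zero.\<close>
lemma eigenfunction_flat_at_imp_zero:
  assumes eig: "\<And>u. Lap w m f u = - K * f u" and flat: "\<And>v. w x v \<noteq> 0 \<Longrightarrow> f v = f x"
  shows "f y = 0"
proof -
  define C where "C = {a. f a = f x \<and> (\<forall>v. w a v \<noteq> 0 \<longrightarrow> f v = f a)}"
  have "b \<in> C" if a: "a \<in> C" and ab: "adj w a b" for a b
  proof -
    have wab: "w a b \<noteq> 0" using ab adj_iff by simp
    have flat_a: "\<And>v. w a v \<noteq> 0 \<Longrightarrow> f v = f a" and fa: "f a = f x" using a by (auto simp: C_def)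
    have fb: "f b = f a" using flat_a wab by simp
    have "f u = f b" if wbu: "w b u \<noteq> 0" for u
    proof (cases "u = a \<or> w a u \<noteq> 0")
      case True then show ?thesis using fb flat_a by auto
    next
      case False
      have "f u = f a + 2 * 0"
        by (rule eigenfunction_two_steps[OF eig _ _ _ wab wbu]) (use False flat_a in auto)
      then show ?thesis using fb by simp
    qed
    then show "b \<in> C" using fa fb by (simp add: C_def)
  qed
  moreover have "x \<in> C" using flat by (simp add: C_def)
  ultimately have "z \<in> C" for z by (rule connected_induct[rotated])
  then have const: "f z = f x" for z by (simp add: C_def)
  have "Lap w m f x = 0"
    unfolding Lap_eq by (rule sum.neutral) (metis const diff_self mult_zero_right)
  then have "f x = 0" using eig[of x] K_pos by simp
  then show ?thesis using const by simp
qed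

lemma zero_eigenvalue_simple:
  fixes \<beta> :: "'v \<Rightarrow> real^'v"
  assumes orthonormal: "\<And>i j. \<beta> i \<bullet> \<beta> j = (if i = j then 1 else 0)"
    and eigen: "\<And>i. sym_Lap_matrix *v \<beta> i = \<mu> i *\<^sub>R \<beta> i"
  shows "card {i. \<mu> i = 0} \<le> 1"
proof -
  define s :: "real^'v" where "s = (\<chi> y. sqrt (m y))"
  have parallel: "\<beta> k = fun_of_vec (\<beta> k) x *\<^sub>R s" if "\<mu> k = 0" for k x
  proof -
    have "fun_of_vec (\<beta> k) y = fun_of_vec (\<beta> k) x" for y
      by (rule harmonic_imp_constant) (use Lap_fun_of_eigenvector[OF eigen[of k]] that in simp)
    then show ?thesis using sqrt_m_pos by (auto simp: vec_eq_iff s_def fun_of_vec_def field_simps)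
  qed
  have "i = j" if "\<mu> i = 0" "\<mu> j = 0" for i j
  proof (rule ccontr)
    fix x
    let ?c = "\<lambda>k. fun_of_vec (\<beta> k) x"
    assume "i \<noteq> j"
    have inner: "\<beta> k \<bullet> \<beta> l = ?c k * ?c l * (s \<bullet> s)" if "\<mu> k = 0" "\<mu> l = 0" for k l
      by (subst parallel[OF that(1), of x], subst parallel[OF that(2), of x]) simp
    have "1 = (?c i * ?c i * (s \<bullet> s)) * (?c j * ?c j * (s \<bullet> s))"
      using orthonormal[of i i] orthonormal[of j j] inner[OF that(1) that(1)] inner[OF that(2) that(2)]
      by simp
    also have "\<dots> = (?c i * ?c j * (s \<bullet> s))^2" by (simp add: power2_eq_square algebra_simps)
    also have "?c i * ?c j * (s \<bullet> s) = 0"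
      using orthonormal[of i j] \<open>i \<noteq> j\<close> inner[OF that] by simp
    finally show False by simp
  qed
  then show ?thesis using card_le_Suc0_iff_eq[of "{i. \<mu> i = 0}"] by auto
qed

text \<open>By Lichnerowicz every eigenvalue up to \<open>\<lambda>\<^bsub>deg_max\<^esub> = K\<close> is \<open>0\<close> or \<open>K\<close>, and
  \<open>0\<close> is simple.\<close>
lemma K_eigenvalue_multiplicity:
  fixes \<beta> :: "'v \<Rightarrow> real^'v"
  assumes lambda_K: "eigenvalues w m ! deg_max w = K"
    and orthonormal: "\<And>i j. \<beta> i \<bullet> \<beta> j = (if i = j then 1 else 0)"
    and eigen: "\<And>i. sym_Lap_matrix *v \<beta> i = \<mu> i *\<^sub>R \<beta> i"
  shows "deg_max w \<le> card {i. \<mu> i = K}" and "\<exists>i. \<mu> i = K"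
proof -
  let ?e = "eigenvalues w m"
  have e: "?e = sorted_list_of_multiset (image_mset \<mu> (mset_set UNIV))"
    by (rule eigenvalues_eq_eigenbasis[OF orthonormal eigen])
  have n: "deg_max w < length ?e"
    using deg_max_less_card length_filter_sorted_image_mset[of "\<lambda>_. True" \<mu>] by (simp add: e)
  have "?e ! deg_max w \<in> set ?e" using n by (rule nth_mem)
  then show "\<exists>i. \<mu> i = K" using lambda_K by (auto simp: e)
  have spectrum: "\<mu> i = 0 \<or> K \<le> \<mu> i" for i
  proof -
    have "fun_of_vec (\<beta> i) \<noteq> (\<lambda>_. 0)" using orthonormal[of i i] by (auto simp: fun_of_vec_eq_0_iff)
    then obtain x where "fun_of_vec (\<beta> i) x \<noteq> 0" by auto
    then show ?thesis by (rule lichnerowicz[OF CD Lap_fun_of_eigenvector[OF eigen]])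
  qed
  have "Suc (deg_max w) \<le> length (filter (\<lambda>l. l \<le> K) ?e)"
    using sorted_nth_le_length_filter[OF _ n] lambda_K by (simp add: e)
  also have "\<dots> = card {i. \<mu> i \<le> K}" by (simp add: e length_filter_sorted_image_mset)
  also have "\<dots> \<le> card ({i. \<mu> i = 0} \<union> {i. \<mu> i = K})"
  proof (rule card_mono)
    show "{i. \<mu> i \<le> K} \<subseteq> {i. \<mu> i = 0} \<union> {i. \<mu> i = K}"
      using spectrum by (force simp: order_antisym)
  qed simp
  also have "\<dots> \<le> 1 + card {i. \<mu> i = K}"
    using card_Un_le[of "{i. \<mu> i = 0}" "{i. \<mu> i = K}"] zero_eigenvalue_simple[OF orthonormal eigen]
    by linarith
  finally show "deg_max w \<le> card {i. \<mu> i = K}" by simp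
qed

definition K_eigenspace :: "(real^'v) set" where
  "K_eigenspace = {v. sym_Lap_matrix *v v = K *\<^sub>R v}"

lemma subspace_K_eigenspace: "subspace K_eigenspace"
  by (auto simp: K_eigenspace_def subspace_def matrix_vector_right_distrib matrix_vector_mult_scaleR
      scaleR_add_right)

lemma Lap_fun_of_K_eigenspace:
  "v \<in> K_eigenspace \<Longrightarrow> Lap w m (fun_of_vec v) u = - K * fun_of_vec v u"
  by (rule Lap_fun_of_eigenvector) (simp add: K_eigenspace_def)

lemma deg_max_le_dim_K_eigenspace:
  assumes lambda_K: "eigenvalues w m ! deg_max w = K"
  shows "deg_max w \<le> dim K_eigenspace"
proof -
  obtain \<beta> :: "'v \<Rightarrow> real^'v" and \<mu>
    where orthonormal: "\<And>i j. \<beta> i \<bullet> \<beta> j = (if i = j then 1 else 0)"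
      and eigen: "\<And>i. sym_Lap_matrix *v \<beta> i = \<mu> i *\<^sub>R \<beta> i"
    using symmetric_matrix_orthonormal_eigenbasis[OF sym_Lap_matrix_symmetric] by blast
  have "inj \<beta>"
    by (rule injI) (use orthonormal in \<open>metis zero_neq_one\<close>)
  have "deg_max w \<le> card {i. \<mu> i = K}" by (rule K_eigenvalue_multiplicity(1)[OF lambda_K orthonormal eigen])
  also have "\<dots> = card (\<beta> ` {i. \<mu> i = K})" using \<open>inj \<beta>\<close> by (simp add: card_image inj_on_subset)
  also have "\<dots> \<le> dim K_eigenspace"
  proof (rule independent_card_le_dim)
    show "\<beta> ` {i. \<mu> i = K} \<subseteq> K_eigenspace" using eigen by (auto simp: K_eigenspace_def)
    have "\<beta> i \<noteq> 0" for i using orthonormal[of i i] by auto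
    then show "independent (\<beta> ` {i. \<mu> i = K})"
      using orthonormal by (intro pairwise_orthogonal_independent) (auto simp: pairwise_def orthogonal_def)
  qed
  finally show ?thesis .
qed

definition gradient_vec :: "'v \<Rightarrow> real^'v \<Rightarrow> real^'v" where
  "gradient_vec x v = (\<chi> y. if w x y \<noteq> 0 then fun_of_vec v y - fun_of_vec v x else 0)"

lemma linear_gradient_vec: "linear (gradient_vec x)"
  by (rule linearI) (auto simp: gradient_vec_def vec_eq_iff fun_of_vec_def add_divide_distrib algebra_simps)

lemma inj_on_gradient_vec: "inj_on (gradient_vec x) K_eigenspace"
proof (rule inj_onI)
  fix u v assume uv: "u \<in> K_eigenspace" "v \<in> K_eigenspace" "gradient_vec x u = gradient_vec x v"
  have "u - v \<in> K_eigenspace" using uv subspace_K_eigenspace by (simp add: subspace_diff)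
  moreover have "fun_of_vec (u - v) y = fun_of_vec (u - v) x" if "w x y \<noteq> 0" for y
  proof -
    have "gradient_vec x u $ y = gradient_vec x v $ y" using uv(3) by simp
    then show ?thesis using that by (simp add: gradient_vec_def fun_of_vec_diff)
  qed
  ultimately have "fun_of_vec (u - v) y = 0" for y
    by (rule eigenfunction_flat_at_imp_zero[OF Lap_fun_of_K_eigenspace])
  then have "fun_of_vec (u - v) = (\<lambda>_. 0)" by auto
  then show "u = v" by (simp add: fun_of_vec_eq_0_iff)
qed

definition unit_gradient_eigenfunction :: "'v \<Rightarrow> ('v \<Rightarrow> real) \<Rightarrow> bool" where
  "unit_gradient_eigenfunction x g \<longleftrightarrow>
    (\<forall>u. Lap w m g u = - K * g u) \<and> (\<forall>v. w x v \<noteq> 0 \<longrightarrow> g v = g x + 1)"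

text \<open>The injective gradient map is onto the vectors supported on the neighbourhood of \<open>x\<close>,
  whose dimension \<open>deg x \<le> deg_max\<close> does not exceed that of the eigenspace.\<close>
lemma unit_gradient_eigenfunction_exists:
  assumes lambda_K: "eigenvalues w m ! deg_max w = K"
  shows "\<exists>g. unit_gradient_eigenfunction x g"
proof -
  define T where "T = {v::real^'v. \<forall>y. y \<notin> {y. w x y \<noteq> 0} \<longrightarrow> v $ y = 0}"
  have "dim T \<le> dim K_eigenspace"
    using dim_vectors_supported_on[of "{y. w x y \<noteq> 0}"] deg_eq_card[of x] deg_le_deg_max[of x]
      deg_max_le_dim_K_eigenspace[OF lambda_K] unfolding T_def by linarith
  moreover have "subspace T" by (auto simp: T_def subspace_def)
  moreover have "gradient_vec x ` K_eigenspace \<subseteq> T" by (auto simp: T_def gradient_vec_def)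
  ultimately have "gradient_vec x ` K_eigenspace = T"
    using linear_gradient_vec inj_on_gradient_vec subspace_K_eigenspace
    by (intro linear_inj_on_image_eq) simp_all
  moreover have "(\<chi> y. if w x y \<noteq> 0 then 1 else 0) \<in> T" by (simp add: T_def)
  ultimately have "(\<chi> y. if w x y \<noteq> 0 then 1 else 0) \<in> gradient_vec x ` K_eigenspace" by simp
  then obtain v where grad_v: "(\<chi> y. if w x y \<noteq> 0 then 1 else 0) = gradient_vec x v"
    and v: "v \<in> K_eigenspace"
    by (rule imageE)
  have "fun_of_vec v y = fun_of_vec v x + 1" if "w x y \<noteq> 0" for y
  proof -
    have "gradient_vec x v $ y = 1" using grad_v[symmetric] that by simp
    then show ?thesis using that by (simp add: gradient_vec_def)
  qed
  then have "unit_gradient_eigenfunction x (fun_of_vec v)"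
    using Lap_fun_of_K_eigenspace[OF v] by (simp add: unit_gradient_eigenfunction_def)
  then show ?thesis by blast
qed

lemma edge_exists:
  assumes lambda_K: "eigenvalues w m ! deg_max w = K"
  shows "\<exists>a b. w a b \<noteq> 0"
proof (rule ccontr)
  assume "\<not> ?thesis"
  then have no_edge: "w a b = 0" for a b by blast
  obtain \<beta> :: "'v \<Rightarrow> real^'v" and \<mu>
    where orthonormal: "\<And>i j. \<beta> i \<bullet> \<beta> j = (if i = j then 1 else 0)"
      and eigen: "\<And>i. sym_Lap_matrix *v \<beta> i = \<mu> i *\<^sub>R \<beta> i"
    using symmetric_matrix_orthonormal_eigenbasis[OF sym_Lap_matrix_symmetric] by blast
  obtain i where "\<mu> i = K" using K_eigenvalue_multiplicity(2)[OF lambda_K orthonormal eigen] by blast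
  have "fun_of_vec (\<beta> i) \<noteq> (\<lambda>_. 0)" using orthonormal[of i i] by (auto simp: fun_of_vec_eq_0_iff)
  then obtain x where "fun_of_vec (\<beta> i) x \<noteq> 0" by auto
  moreover have "Lap w m (fun_of_vec (\<beta> i)) x = 0" by (simp add: Lap_eq no_edge)
  ultimately show False
    using Lap_fun_of_eigenvector[OF eigen, of i x] \<open>\<mu> i = K\<close> K_pos by simp
qed

lemma Lap_unit_gradient_eigenfunction:
  assumes "unit_gradient_eigenfunction x g"
  shows "Lap w m g x = Deg w m x"
  unfolding Lap_eq Deg_eq using assms
  by (intro sum.cong) (auto simp: unit_gradient_eigenfunction_def)

text \<open>Equality in \<open>CD(K,\<infinity>)\<close> tested against \<open>\<delta>\<^sub>y\<close> for a neighbour \<open>y\<close> of \<open>x\<close>.\<close>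
lemma Deg_increment_eq_two_step:
  assumes g: "unit_gradient_eigenfunction x g" and xy: "w x y \<noteq> 0"
  shows "w x y / m x * (Deg w m y - Deg w m x) = two_step x y"
proof -
  have eig: "\<And>u. Lap w m g u = - K * g u" and grad: "\<And>v. w x v \<noteq> 0 \<Longrightarrow> g v = g x + 1"
    using g unfolding unit_gradient_eigenfunction_def by auto
  let ?p = "w x y / m x"
  have "Gam2 w m g (delta y) x = K * Gam w m g (delta y) x"
    by (rule CD_equality_for_eigenfunction[OF CD eig])
  moreover have "Gam2 w m g (delta y) x
      = (K * ?p * g y - two_step x y + ?p * Deg w m y + K * ?p) / 4"
    using xy grad eig by (rule Gam2_delta_near)
  moreover have "Gam w m g (delta y) x = ?p / 2"
    using xy grad[of y] by (auto simp: Gam_delta)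
  ultimately have "K * ?p * g y - two_step x y + ?p * Deg w m y + K * ?p = 2 * K * ?p"
    by simp
  moreover have "K * ?p * g y = - ?p * Deg w m x + K * ?p"
  proof -
    have "K * ?p * g y = ?p * (K * g x) + K * ?p" using grad[OF xy] by (simp add: algebra_simps add_divide_distrib)
    also have "K * g x = - Deg w m x"
      using Lap_unit_gradient_eigenfunction[OF g] eig[of x] by simp
    finally show ?thesis by simp
  qed
  ultimately show ?thesis by (simp only: right_diff_distrib)
qed

end

section \<open>Rigidity\<close>

locale rigid_cd_graph = cd_graph w m K for w :: "'v::finite \<Rightarrow> 'v \<Rightarrow> real" and m K +
  assumes unit_gradient_eigenfunction_ex: "\<exists>g. unit_gradient_eigenfunction x g"
begin

lemma Deg_le_adj:
  assumes "w x y \<noteq> 0"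
  shows "Deg w m x \<le> Deg w m y"
proof -
  obtain g where "unit_gradient_eigenfunction x g" using unit_gradient_eigenfunction_ex by blast
  then have "0 \<le> w x y / m x * (Deg w m y - Deg w m x)"
    using Deg_increment_eq_two_step assms two_step_nonneg by simp
  moreover have "0 < w x y / m x" using assms by (simp add: transition_pos_iff)
  ultimately show ?thesis using zero_le_mult_iff[of "w x y / m x" "Deg w m y - Deg w m x"] by linarith
qed

lemma Deg_const: "Deg w m y = Deg w m x"
proof -
  have step: "Deg w m b = Deg w m a" if "adj w a b" for a b
    using that Deg_le_adj[of a b] Deg_le_adj[of b a] by (simp add: adj_iff w_sym)
  have "y \<in> {z. Deg w m z = Deg w m x}" by (rule connected_induct[of x]) (auto dest: step)
  then show ?thesis by simp
qed

lemma no_triangles: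
  assumes "w x y \<noteq> 0" "w x u \<noteq> 0"
  shows "w u y = 0"
proof -
  obtain g where g: "unit_gradient_eigenfunction x g" using unit_gradient_eigenfunction_ex by blast
  have "two_step x y = 0" using Deg_increment_eq_two_step[OF g assms(1)] Deg_const[of y x] by simp
  then have "w x u / m x * (w u y / m u) = 0"
    unfolding two_step_def
    by (subst (asm) sum_nonneg_eq_0_iff) (use mult_nonneg_nonneg[OF transition_nonneg transition_nonneg] in auto)
  then show ?thesis using assms(2) by simp
qed

text \<open>With \<open>g\<close> of unit gradient at \<open>x\<close>, the neighbours \<open>u \<noteq> x\<close> of a neighbour \<open>y\<close> satisfy
  \<open>g u = g x + 2\<close> (no triangles, and \<open>eigenfunction_two_steps\<close>); comparing
  \<open>\<Delta>g(y) = Deg - 2 w(y,x)/m(y)\<close> with \<open>\<Delta>g(y) = -Kg(y) = Deg - K\<close> gives the edge weight.\<close>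
lemma edge_weight:
  assumes yx: "w y x \<noteq> 0"
  shows "w y x / m y = K / 2"
proof -
  have xy: "w x y \<noteq> 0" using yx w_sym by simp
  obtain g where g: "unit_gradient_eigenfunction x g" using unit_gradient_eigenfunction_ex by blast
  have eig: "\<And>u. Lap w m g u = - K * g u" and grad: "\<And>v. w x v \<noteq> 0 \<Longrightarrow> g v = g x + 1"
    using g unfolding unit_gradient_eigenfunction_def by auto
  have gy: "g y = g x + 1" using grad xy by simp
  have far: "g u = g x + 2" if "w y u \<noteq> 0" "u \<noteq> x" for u
  proof -
    have "w x u = 0" using no_triangles[of x u y] xy that(1) by auto
    then have "g u = g x + 2 * 1"
      by (rule eigenfunction_two_steps[OF eig that(2) _ _ xy that(1)]) (use grad in simp)
    then show ?thesis by simp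
  qed
  have "w y u / m y * (g u - g y) = w y u / m y - (if u = x then 2 * (w y x / m y) else 0)" for u
    using far[of u] gy by (cases "u = x"; cases "w y u = 0") auto
  then have "Lap w m g y = Deg w m y - 2 * (w y x / m y)"
    unfolding Lap_eq Deg_eq by (simp add: sum_subtractf)
  moreover have "Lap w m g y = Deg w m x - K"
    using eig[of y] eig[of x] Lap_unit_gradient_eigenfunction[OF g] gy by (simp add: algebra_simps)
  ultimately show ?thesis using Deg_const[of y x] by simp
qed

lemma edge_weight_values: "w x y / m x \<in> {0, K / 2}"
  using edge_weight[of x y] by (cases "w x y = 0") auto

definition distance_profile :: "'v \<Rightarrow> ('v \<Rightarrow> real) \<Rightarrow> 'v \<Rightarrow> bool" where
  "distance_profile x0 g z \<longleftrightarrow> g z = g x0 + gdist w z x0 \<and>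
    (\<forall>u. w z u \<noteq> 0 \<longrightarrow> (gdist w u x0 = gdist w z x0 + 1 \<or> gdist w u x0 + 1 = gdist w z x0) \<and>
      g u = g x0 + gdist w u x0)"

text \<open>The inductive step for a neighbour \<open>u\<close> of \<open>z\<close> that is not closer to \<open>x\<^sub>0\<close>: with \<open>v\<close> a
  predecessor of \<open>z\<close>, every common neighbour of \<open>v\<close> and \<open>u\<close> lies one shell beyond \<open>v\<close>, so
  \<open>g u = g v + 2\<close>; this rules out \<open>u\<close> lying in the shell of \<open>z\<close>.\<close>
lemma distance_profile_outward:
  assumes g: "unit_gradient_eigenfunction x0 g"
    and closer: "\<And>z'. gdist w z' x0 < gdist w z x0 \<Longrightarrow> distance_profile x0 g z'"
    and v: "w v z \<noteq> 0" "gdist w v x0 + 1 = gdist w z x0"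
    and u: "w z u \<noteq> 0" "gdist w z x0 \<le> gdist w u x0"
  shows "gdist w u x0 = gdist w z x0 + 1 \<and> g u = g x0 + gdist w u x0"
proof -
  let ?d = "\<lambda>z. gdist w z x0"
  have eig: "\<And>u. Lap w m g u = - K * g u" using g unfolding unit_gradient_eigenfunction_def by auto
  have Pv: "distance_profile x0 g v" using closer v(2) by simp
  have "u \<noteq> v" using u(2) v(2) by auto
  have vu: "w v u = 0" using no_triangles[of z v u] v(1) u(1) w_sym[of v z] w_sym[of u v] by simp
  have "g v' = g v + 1" if "w v v' \<noteq> 0" "w v' u \<noteq> 0" for v'
  proof -
    have "?d v' = ?d v + 1 \<or> ?d v' + 1 = ?d v" "g v' = g x0 + ?d v'"
      using Pv that(1) by (auto simp: distance_profile_def)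
    moreover have "?d u \<le> ?d v' + 1" using gdist_edge[OF that(2)] by simp
    ultimately show ?thesis using Pv u(2) v(2) by (auto simp: distance_profile_def)
  qed
  then have "g u = g v + 2 * 1"
    by (rule eigenfunction_two_steps[OF eig \<open>u \<noteq> v\<close> vu _ v(1) u(1)])
  then have gu: "g u = g x0 + ?d z + 1" using Pv v(2) by (simp add: distance_profile_def)
  have "?d u \<noteq> ?d z"
  proof
    assume same: "?d u = ?d z"
    then have "0 < ?d u" using v(2) by simp
    then obtain v'' where v'': "w u v'' \<noteq> 0" "?d v'' + 1 = ?d u" by (rule gdist_predecessor)
    then have "distance_profile x0 g v''" using closer same by simp
    then have "g u = g x0 + ?d u" using v''(1) w_sym[of u v''] by (simp add: distance_profile_def)
    then show False using gu same by simp
  qed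
  then have "?d u = ?d z + 1" using gdist_edge[OF u(1), of x0] u(2) by simp
  then show ?thesis using gu by simp
qed

lemma distance_profile_holds:
  assumes g: "unit_gradient_eigenfunction x0 g"
  shows "distance_profile x0 g z"
proof (induction "gdist w z x0" arbitrary: z rule: less_induct)
  case less
  let ?d = "\<lambda>z. gdist w z x0"
  have grad: "\<And>v. w x0 v \<noteq> 0 \<Longrightarrow> g v = g x0 + 1" using g unfolding unit_gradient_eigenfunction_def by auto
  show ?case
  proof (cases "z = x0")
    case True
    have "?d u = 1" if "w x0 u \<noteq> 0" for u
    proof -
      have "u \<noteq> x0" using that by auto
      then show ?thesis using gdist_edge[OF that, of x0] gdist_eq_0_iff[of u x0] gdist_self[of x0] by simp
    qed
    then show ?thesis using True grad gdist_self[of x0] by (simp add: distance_profile_def)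
  next
    case False
    then obtain v where v: "w z v \<noteq> 0" "?d v + 1 = ?d z"
      using gdist_eq_0_iff[of z x0] by (auto elim: gdist_predecessor)
    have Pv: "distance_profile x0 g v" using less v(2) by simp
    have "w v z \<noteq> 0" using v(1) w_sym[of z v] by simp
    then have "g z = g x0 + ?d z" using Pv by (simp add: distance_profile_def)
    moreover have "(?d u = ?d z + 1 \<or> ?d u + 1 = ?d z) \<and> g u = g x0 + ?d u" if u: "w z u \<noteq> 0" for u
    proof (cases "?d u < ?d z")
      case True
      then show ?thesis using less gdist_edge[OF u, of x0] by (auto simp: distance_profile_def)
    next
      case False
      then show ?thesis
        using distance_profile_outward[OF g _ _ v(2) u] less v(1) w_sym[of z v] by auto
    qed
    ultimately show ?thesis by (simp add: distance_profile_def)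
  qed
qed

lemma bipartite: "bipartite_graph w"
proof -
  fix x0
  obtain g where g: "unit_gradient_eigenfunction x0 g" using unit_gradient_eigenfunction_ex by blast
  have "even (gdist w a x0) \<noteq> even (gdist w b x0)" if "adj w a b" for a b
  proof -
    have "gdist w b x0 = gdist w a x0 + 1 \<or> gdist w b x0 + 1 = gdist w a x0"
      using distance_profile_holds[OF g, of a] that by (simp add: distance_profile_def adj_iff)
    then show ?thesis by presburger
  qed
  then show ?thesis unfolding bipartite_graph_def by (intro exI[of _ "\<lambda>x. even (gdist w x x0)"]) simp
qed

text \<open>Every edge at \<open>z\<close> has weight \<open>K/2\<close> and leads one shell outwards or inwards, where \<open>g\<close>
  changes by \<open>\<plusminus>1\<close>; so \<open>Deg = K/2 (up + down)\<close> and \<open>\<Delta>g(z) = K/2 (up - down)\<close>, while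
  \<open>\<Delta>g(z) = -Kg(z) = Deg - K d(z,x\<^sub>0)\<close>.\<close>
lemma card_inward_neighbours:
  "card {u. w z u \<noteq> 0 \<and> gdist w u x0 + 1 = gdist w z x0} = gdist w z x0"
proof -
  obtain g where g: "unit_gradient_eigenfunction x0 g" using unit_gradient_eigenfunction_ex by blast
  let ?d = "\<lambda>z. gdist w z x0"
  define up where "up = {u. w z u \<noteq> 0 \<and> ?d u = ?d z + 1}"
  define dn where "dn = {u. w z u \<noteq> 0 \<and> ?d u + 1 = ?d z}"
  have P: "distance_profile x0 g z" by (rule distance_profile_holds[OF g])
  have weight: "w z u / m z = (if u \<in> up then K / 2 else 0) + (if u \<in> dn then K / 2 else 0)" for u
    using P edge_weight[of z u] by (cases "w z u = 0") (auto simp: up_def dn_def distance_profile_def)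
  have slope: "w z u / m z * (g u - g z) = (if u \<in> up then K / 2 else 0) - (if u \<in> dn then K / 2 else 0)" for u
  proof (cases "w z u = 0")
    case False
    have half: "w z u / m z = K / 2" using edge_weight[of z u] False by simp
    have "?d u = ?d z + 1 \<or> ?d u + 1 = ?d z" "g u - g z = real (?d u) - real (?d z)"
      using P False by (auto simp: distance_profile_def)
    then consider "?d u = ?d z + 1" "g u - g z = 1" | "?d u + 1 = ?d z" "g u - g z = - 1"
      by fastforce
    then show ?thesis by cases (use False half in \<open>auto simp: up_def dn_def\<close>)
  qed (simp add: up_def dn_def)
  have "Deg w m z = real (card up) * (K / 2) + real (card dn) * (K / 2)"
    unfolding Deg_eq weight sum.distrib sum_if_mem_const by simp
  moreover have "Lap w m g z = real (card up) * (K / 2) - real (card dn) * (K / 2)"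
    unfolding Lap_eq slope sum_subtractf sum_if_mem_const by simp
  moreover have "Lap w m g z = Deg w m x0 - K * ?d z"
    using g P Lap_unit_gradient_eigenfunction[OF g]
    by (auto simp: unit_gradient_eigenfunction_def distance_profile_def algebra_simps)
  ultimately have "real (card dn) = real (?d z)"
    using Deg_const[of z x0] K_pos by (simp add: algebra_simps)
  then show ?thesis by (simp add: dn_def)
qed

lemma d_minus_eq: "d_minus w m x0 z = K / 2 * gdist w z x0"
proof -
  let ?dn = "{u. w z u \<noteq> 0 \<and> gdist w u x0 + 1 = gdist w z x0}"
  obtain g where g: "unit_gradient_eigenfunction x0 g" using unit_gradient_eigenfunction_ex by blast
  have "{y. adj w y z \<and> gdist w y x0 < gdist w z x0} = ?dn"
    using distance_profile_holds[OF g, of z]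
    by (auto simp: adj_iff w_sym distance_profile_def)
  then have "d_minus w m x0 z = (\<Sum>y\<in>?dn. w y z / m z)" unfolding d_minus_def by simp
  also have "\<dots> = (\<Sum>y\<in>?dn. K / 2)"
    using edge_weight[of z] w_sym[of z] by (intro sum.cong) auto
  also have "\<dots> = K / 2 * card ?dn" by simp
  finally show ?thesis by (simp only: card_inward_neighbours)
qed

lemma Deg_max_eq: "Deg_max w m = Deg w m x"
proof -
  have "range (Deg w m) = {Deg w m x}"
    using Deg_const[of _ x] by (metis (mono_tags) UNIV_I image_constant image_cong)
  then show ?thesis unfolding Deg_max_def by simp
qed

lemma HSS_holds:
  assumes "w a b \<noteq> 0"
  shows "HSS w m (2 * Deg_max w m / K) (K / 2) x0"
  unfolding HSS_def
proof (intro conjI allI)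
  show "0 < 2 * Deg_max w m / K" using Deg_pos[OF assms] Deg_max_eq[of a] K_pos by simp
  show "0 < K / 2" using K_pos by simp
  show "Deg w m x = 2 * Deg_max w m / K * (K / 2)" for x using Deg_max_eq[of x] K_pos by simp
  show "bipartite_graph w" by (rule bipartite)
  show "d_minus w m x0 x = K / 2 * real (gdist w x x0)" for x by (rule d_minus_eq)
qed

end

theorem theorem4:
  fixes w :: "'v::finite \<Rightarrow> 'v \<Rightarrow> real" and m :: "'v \<Rightarrow> real" and K :: real
  assumes "weighted_graph w m"
    and "connected_graph w"
    and "K > 0"
    and "CD_inf w m K"
    and "eigenvalues w m ! deg_max w = K"
  shows "(\<forall>x0. HSS w m (2 * Deg_max w m / K) (K / 2) x0) \<and>
         (\<exists>\<kappa>0 > 0. \<forall>x y. w x y / m x \<in> {0, \<kappa>0})"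
proof -
  interpret cd_graph w m K
    using assms(1-4) by unfold_locales
  interpret rigid_cd_graph w m K
    by unfold_locales (rule unit_gradient_eigenfunction_exists[OF assms(5)])
  obtain a b where "w a b \<noteq> 0" using edge_exists[OF assms(5)] by blast
  then have "\<forall>x0. HSS w m (2 * Deg_max w m / K) (K / 2) x0" using HSS_holds by blast
  moreover have "\<exists>\<kappa>0 > 0. \<forall>x y. w x y / m x \<in> {0, \<kappa>0}"
    using K_pos edge_weight_values by (intro exI[of _ "K / 2"]) simp
  ultimately show ?thesis by blast
qed

end
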